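(* Let $\mathcal H=\mathbb R^p$ (a $p$-dimensional Hilbert space with inner product $\langle\cdot,\cdot\rangle$ and norm $\|\cdot\|$), let $(Z,\rho)$ be a probability space, and let $z_0,z_1,z_2,\dots$ be i.i.d. samples from $\rho$; write $S_n=(z_0,\dots,z_{n-1})$. Let $V:\mathcal H\times Z\to\mathbb R_+$ be a loss such that $V(\cdot,z)$ is convex and twice differentiable for every $z\in Z$, such that $I(f)=\mathbb E_{z}V(f,z)$ exists and is finite for all $f\in\mathcal H$, and such that the Hessian $H(V(f,z))$ of $V(\cdot,z)$ at $f$ satisfies $\langle g, H(V(f,z))\, g\rangle\ge 0$ and $\|H(V(f,z))\|\le M<\infty$ for all $f,g\in\mathcal H$, $z\in Z$. Let $K\subseteq\mathcal H$ be closed and convex. Consider stochastic gradient descent $f_0=0$, $f_{n+1}=f_n-\gamma_n\nabla V(f_n,z_n)$, where $\gamma_n>0$. Assume: (i) there exists $f_K\in K$ with $\nabla I(f_K)=0$ and $\langle f-f_K,\nabla I(f)\rangle>0$ for all $f\in\mathcal H$ with $f\neq f_K$; (ii) $\sum_n\gamma_n=\infty$ and $\sum_n\gamma_n^2<\infty$; (iii) there exist $C,N>0$ such that for all $n>N$, $$0<\mathbb E_{z_n}\big[V(f_n,z_n)-V(f_{n+1},z_n)\,\big|\,S_n\big]\le C\gamma_n .$$ Then $\mathbb P\big(\lim_{n\to\infty}\|f_n-f_K\|=0\big)=1$.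
   Context: $\nabla V(f,z)$ denotes the gradient of $V(\cdot,z)$ at $f$. The conditional expectation $\mathbb E_{z_n}[\,\cdot\,|S_n]$ is the expectation over $z_n$ with $z_0,\dots,z_{n-1}$ (hence $f_n$) held fixed. Condition (iii) is the $\mathrm{CV}_{on}$ stability of the algorithm with rate $\beta_n=C\gamma_n$. In this section the paper considers the case where the projection onto $K$ in projected SGD $f_{n+1}=\Pi_K(f_n-\gamma_n\nabla V(f_n,z_n))$ can be dropped, giving the unprojected update above. *)

theory Defs
  imports "HOL-Analysis.Analysis" "HOL-Probability.Probability"
begin

text \<open>Unprojected SGD iterates along a sample sequence zs:
  f_0 = 0, f_(n+1) = f_n - gamma_n * gradV(f_n, z_n).
  Note that sgd gamma gradV zs n depends only on zs 0, ..., zs (n-1), i.e. on S_n.\<close>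
primrec sgd :: "(nat \<Rightarrow> real) \<Rightarrow> ('a::real_vector \<Rightarrow> 'z \<Rightarrow> 'a) \<Rightarrow> (nat \<Rightarrow> 'z) \<Rightarrow> nat \<Rightarrow> 'a"
where
  "sgd \<gamma> gV zs 0 = 0"
| "sgd \<gamma> gV zs (Suc n) = sgd \<gamma> gV zs n - \<gamma> n *\<^sub>R gV (sgd \<gamma> gV zs n) (zs n)"

definition risk :: "'z measure \<Rightarrow> ('a \<Rightarrow> 'z \<Rightarrow> real) \<Rightarrow> 'a \<Rightarrow> real" where
  "risk \<rho> V f = (\<integral>z. V f z \<partial>\<rho>)"

end

theory Submission
  imports Defs
begin

text \<open>Write the iteration as f_(n+1) = f_n - \<gamma>_n \<nabla>I(f_n) - \<xi>_n, where
  \<xi>_n = \<gamma>_n (\<nabla>V(f_n, z_n) - \<nabla>I(f_n)) has mean zero given the past.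
  The Hessian bound makes a gradient step of length \<gamma>_n decrease V(\<cdot>, z) by at least
  \<gamma>_n/2 \<parallel>\<nabla>V\<parallel>^2, so the stability condition (iii) yields E \<parallel>\<nabla>V(f_n, z)\<parallel>^2 \<le> 2C for large n.
  Hence the increments \<xi>_n are orthogonal with E \<parallel>\<xi>_n\<parallel>^2 \<le> 2C \<gamma>_n^2, which is summable, and
  Kolmogorov's maximal inequality shows that \<Sum> \<xi>_n converges almost surely.
  On such a sample path, f_n is a gradient descent for I with bounded drift and an error that
  tends to 0. The drift \<nabla>I is monotone and points away from fK, hence uniformly away from fK
  outside any ball around fK; since \<Sum> \<gamma>_n = \<infinity>, the iterates eventually enter every such ball
  and, as \<gamma>_n \<rightarrow> 0, cannot leave it again.\<close>

lemma has_derivative_of_quadratic_remainder: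
  fixes F :: "'a::real_normed_vector \<Rightarrow> real"
  assumes L: "bounded_linear L"
    and remainder: "\<And>h. \<bar>F (x + h) - F x - L h\<bar> \<le> c * (norm h)\<^sup>2"
  shows "(F has_derivative L) (at x)"
  unfolding has_derivative_at
proof (intro conjI L)
  have bound: "norm (norm (F (x + h) - F x - L h) / norm h) \<le> c * norm h" for h
  proof (cases "h = 0")
    case True
    then show ?thesis using remainder[of 0] by simp
  next
    case False
    then have "norm (norm (F (x + h) - F x - L h) / norm h) = \<bar>F (x + h) - F x - L h\<bar> / norm h"
      by simp
    also have "\<dots> \<le> c * (norm h)\<^sup>2 / norm h"
      using remainder[of h] by (intro divide_right_mono) auto
    also have "\<dots> = c * norm h" using False by (simp add: power2_eq_square)
    finally show ?thesis .
  qed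
  have "((\<lambda>h. c * norm h) \<longlongrightarrow> 0) (at (0::'a))"
    by (intro tendsto_mult_right_zero tendsto_norm_zero tendsto_ident_at)
  then show "((\<lambda>h. norm (F (x + h) - F x - L h) / norm h) \<longlongrightarrow> 0) (at 0)"
    by (rule Lim_null_comparison[OF always_eventually[OF allI[OF bound]]])
qed

lemma abs_inner_le_half_sum_squares:
  fixes a b :: "'a::real_inner"
  shows "\<bar>a \<bullet> b\<bar> \<le> ((norm a)\<^sup>2 + (norm b)\<^sup>2) / 2"
proof -
  have "\<bar>a \<bullet> b\<bar> \<le> norm a * norm b" by (rule Cauchy_Schwarz_ineq2)
  also have "\<dots> \<le> ((norm a)\<^sup>2 + (norm b)\<^sup>2) / 2"
    using zero_le_power2[of "norm a - norm b"] by (simp add: power2_eq_square algebra_simps)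
  finally show ?thesis .
qed

lemma power2_norm_add:
  fixes a b :: "'a::real_inner"
  shows "(norm (a + b))\<^sup>2 = (norm a)\<^sup>2 + 2 * (a \<bullet> b) + (norm b)\<^sup>2"
  using dot_norm[of a b] by simp

section \<open>Joint measurability of Carath\'eodory functions\<close>

definition dyadic_round :: "nat \<Rightarrow> 'a::euclidean_space \<Rightarrow> 'a" where
  "dyadic_round k x = (\<Sum>b\<in>Basis. (real_of_int \<lfloor>2^k * (x \<bullet> b)\<rfloor> / 2^k) *\<^sub>R b)"

lemma borel_measurable_dyadic_round: "dyadic_round k \<in> borel_measurable borel"
  unfolding dyadic_round_def by measurable

lemma norm_dyadic_round_diff_le:
  fixes x :: "'a::euclidean_space"
  shows "norm (dyadic_round k x - x) \<le> real DIM('a) / 2^k"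
proof -
  have coord: "\<bar>real_of_int \<lfloor>2^k * (x \<bullet> b)\<rfloor> / 2^k - x \<bullet> b\<bar> \<le> 1 / 2^k" for b :: 'a
  proof -
    have "real_of_int \<lfloor>2^k * (x \<bullet> b)\<rfloor> / 2^k - x \<bullet> b
        = (real_of_int \<lfloor>2^k * (x \<bullet> b)\<rfloor> - 2^k * (x \<bullet> b)) / 2^k"
      by (simp add: diff_divide_distrib)
    then have "\<bar>real_of_int \<lfloor>2^k * (x \<bullet> b)\<rfloor> / 2^k - x \<bullet> b\<bar>
        = \<bar>real_of_int \<lfloor>2^k * (x \<bullet> b)\<rfloor> - 2^k * (x \<bullet> b)\<bar> / 2^k"
      by (simp add: abs_divide)
    also have "\<dots> \<le> 1 / 2^k"
      by (intro divide_right_mono) (linarith, simp)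
    finally show ?thesis .
  qed
  have "dyadic_round k x - x = (\<Sum>b\<in>Basis. (real_of_int \<lfloor>2^k * (x \<bullet> b)\<rfloor> / 2^k - x \<bullet> b) *\<^sub>R b)"
    unfolding dyadic_round_def
    by (subst (3) euclidean_representation[symmetric]) (simp add: sum_subtractf scaleR_diff_left)
  also have "norm \<dots> \<le> (\<Sum>b\<in>(Basis::'a set). norm ((real_of_int \<lfloor>2^k * (x \<bullet> b)\<rfloor> / 2^k - x \<bullet> b) *\<^sub>R b))"
    by (rule norm_sum)
  also have "\<dots> \<le> (\<Sum>b\<in>(Basis::'a set). 1 / 2^k)"
    using coord by (intro sum_mono) simp
  finally show ?thesis by simp
qed

lemma dyadic_round_tendsto: "(\<lambda>k. dyadic_round k x) \<longlonglongrightarrow> x"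
proof -
  have "(\<lambda>k. real DIM('a) / 2^k) \<longlonglongrightarrow> 0"
    by (intro tendsto_divide_0[OF tendsto_const]) (simp add: filterlim_realpow_sequentially_gt1)
  then have "(\<lambda>k. norm (dyadic_round k x - x)) \<longlonglongrightarrow> 0"
    by (rule Lim_null_comparison[rotated]) (auto intro: always_eventually norm_dyadic_round_diff_le)
  then show ?thesis by (simp add: tendsto_norm_zero_iff LIM_zero_iff)
qed

lemma countable_range_dyadic_round: "countable (range (dyadic_round k :: 'a::euclidean_space \<Rightarrow> 'a))"
proof -
  have "range (dyadic_round k :: 'a \<Rightarrow> 'a)
          \<subseteq> (\<lambda>c. \<Sum>b\<in>Basis. (real_of_int (c b) / 2^k) *\<^sub>R b) ` (Pi\<^sub>E Basis (\<lambda>_. UNIV))"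
  proof
    fix y assume "y \<in> range (dyadic_round k :: 'a \<Rightarrow> 'a)"
    then obtain x where "y = dyadic_round k x" by auto
    then show "y \<in> (\<lambda>c. \<Sum>b\<in>Basis. (real_of_int (c b) / 2^k) *\<^sub>R b) ` (Pi\<^sub>E Basis (\<lambda>_. UNIV))"
      unfolding dyadic_round_def
      by (intro image_eqI[of _ _ "restrict (\<lambda>b. \<lfloor>2^k * (x \<bullet> b)\<rfloor>) Basis"]) auto
  qed
  moreover have "countable (Pi\<^sub>E (Basis::'a set) (\<lambda>_. UNIV :: int set))"
    by (intro countable_PiE) auto
  ultimately show ?thesis by (meson countable_image countable_subset)
qed

lemma measurable_dyadic_round_count_space:
  fixes F :: "_ \<Rightarrow> 'a::euclidean_space"
  assumes F: "F \<in> borel_measurable N"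
  shows "(\<lambda>x. dyadic_round k (F x)) \<in> measurable N (count_space (range (dyadic_round k)))"
proof (subst measurable_count_space_eq_countable[OF countable_range_dyadic_round], safe)
  fix a :: 'a
  have "(\<lambda>x. dyadic_round k (F x)) \<in> borel_measurable N"
    using measurable_comp[OF F borel_measurable_dyadic_round] by (simp add: comp_def)
  then show "(\<lambda>x. dyadic_round k (F x)) -` {a} \<inter> space N \<in> sets N"
    by (rule measurable_sets) simp
qed auto

text \<open>The first argument is rounded to a countable dyadic grid, where measurability
  is inherited from measurability in the second argument; continuity passes to the limit.\<close>

lemma borel_measurable_caratheodory:
  fixes F :: "'a::euclidean_space \<Rightarrow> 'z \<Rightarrow> 'b::metric_space"
  assumes meas: "\<And>x. F x \<in> borel_measurable N"
    and cont: "\<And>z. z \<in> space N \<Longrightarrow> continuous_on UNIV (\<lambda>x. F x z)"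
  shows "(\<lambda>p. F (fst p) (snd p)) \<in> borel_measurable (borel \<Otimes>\<^sub>M N)"
proof (rule borel_measurable_LIMSEQ_metric)
  show "(\<lambda>p. F (dyadic_round k (fst p)) (snd p)) \<in> borel_measurable (borel \<Otimes>\<^sub>M N)" for k
  proof (rule measurable_compose_countable'[OF _ _ countable_range_dyadic_round])
    show "(\<lambda>p. F x (snd p)) \<in> borel_measurable (borel \<Otimes>\<^sub>M N)" for x
      using measurable_comp[OF measurable_snd meas] by (simp add: comp_def)
    show "(\<lambda>p. dyadic_round k (fst p)) \<in> measurable (borel \<Otimes>\<^sub>M N) (count_space (range (dyadic_round k)))"
      by (rule measurable_dyadic_round_count_space[OF measurable_fst[of borel N], simplified])
  qed
  show "(\<lambda>k. F (dyadic_round k (fst p)) (snd p)) \<longlonglongrightarrow> F (fst p) (snd p)"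
    if "p \<in> space (borel \<Otimes>\<^sub>M N)" for p
  proof -
    have "snd p \<in> space N" using that by (simp add: space_pair_measure mem_Times_iff)
    from continuous_on_tendsto_compose[OF cont[OF this] dyadic_round_tendsto]
    show ?thesis by simp
  qed
qed

section \<open>Perturbed gradient descent\<close>

lemma not_summable_descent_reaches:
  fixes D g :: "nat \<Rightarrow> real"
  assumes descent: "\<And>n. n \<ge> n0 \<Longrightarrow> \<not> P n \<Longrightarrow> D (Suc n) \<le> D n - c * g n"
    and D_nonneg: "\<And>n. D n \<ge> 0" and c: "c > 0"
    and g_nonneg: "\<And>n. g n \<ge> 0" and g_not_summable: "\<not> summable g"
  shows "\<exists>n\<ge>n0. P n"
proof (rule ccontr)
  assume never: "\<not> (\<exists>n\<ge>n0. P n)"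
  have D_le: "D (n0 + k) \<le> D n0 - c * (\<Sum>i\<in>{n0..<n0 + k}. g i)" for k
  proof (induction k)
    case (Suc k)
    then show ?case
      using descent[of "n0 + k"] never by (simp add: algebra_simps)
  qed simp
  have "summable g"
  proof (rule summableI_nonneg_bounded[OF g_nonneg])
    fix n
    have "sum g {..<n} \<le> sum g {..<n0 + n}"
      using g_nonneg by (intro sum_mono2) auto
    also have "\<dots> = sum g {..<n0} + sum g {n0..<n0 + n}"
      unfolding lessThan_atLeast0 by (rule sum.atLeastLessThan_concat[symmetric]) auto
    also have "sum g {n0..<n0 + n} \<le> D n0 / c"
      using D_le[of n] D_nonneg[of "n0 + n"] c by (simp add: field_simps)
    finally show "sum g {..<n} \<le> sum g {..<n0} + D n0 / c" by simp
  qed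
  with g_not_summable show False by contradiction
qed

lemma perturbed_descent_step:
  fixes w e d x0 :: "'a::real_inner"
  assumes drift: "c \<le> (w - e - x0) \<bullet> d" and d: "norm d \<le> B" and g: "g \<ge> 0"
    and small: "2 * norm e * B + g * B\<^sup>2 \<le> c"
  shows "(norm (w - g *\<^sub>R d - x0))\<^sup>2 \<le> (norm (w - x0))\<^sup>2 - c * g"
proof -
  have "\<bar>e \<bullet> d\<bar> \<le> norm e * B"
    using Cauchy_Schwarz_ineq2[of e d] mult_left_mono[OF d norm_ge_zero[of e]] by linarith
  moreover have "(w - x0) \<bullet> d = (w - e - x0) \<bullet> d + e \<bullet> d"
    by (simp add: inner_diff_left)
  ultimately have "c - norm e * B \<le> (w - x0) \<bullet> d"
    using drift by linarith
  then have "2 * g * (c - norm e * B) \<le> 2 * g * ((w - x0) \<bullet> d)"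
    using g by (intro mult_left_mono) auto
  moreover have "g\<^sup>2 * (norm d)\<^sup>2 \<le> g\<^sup>2 * B\<^sup>2"
    using d by (intro mult_left_mono power_mono) auto
  moreover have "(norm (w - g *\<^sub>R d - x0))\<^sup>2 = (norm (w - x0))\<^sup>2 - 2 * g * ((w - x0) \<bullet> d) + g\<^sup>2 * (norm d)\<^sup>2"
    using power2_norm_add[of "w - x0" "- g *\<^sub>R d"] by (simp add: algebra_simps power_mult_distrib)
  moreover have "g * (2 * norm e * B + g * B\<^sup>2) \<le> g * c"
    using small g by (rule mult_left_mono)
  ultimately show ?thesis by (simp add: algebra_simps power2_eq_square)
qed

lemma monotone_field_ray:
  fixes G :: "'a::real_inner \<Rightarrow> 'a"
  assumes mono: "\<And>x y. (G x - G y) \<bullet> (x - y) \<ge> 0" and t: "t \<ge> 1"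
  shows "(u - x0) \<bullet> G u \<le> (u - x0) \<bullet> G (x0 + t *\<^sub>R (u - x0))"
proof -
  have "0 \<le> (G (x0 + t *\<^sub>R (u - x0)) - G u) \<bullet> ((t - 1) *\<^sub>R (u - x0))"
    using mono[of "x0 + t *\<^sub>R (u - x0)" u] by (simp add: algebra_simps)
  then have "0 \<le> (G (x0 + t *\<^sub>R (u - x0)) - G u) \<bullet> (u - x0)"
    using t by (cases "t = 1") (auto simp: zero_le_mult_iff)
  moreover have "(G (x0 + t *\<^sub>R (u - x0)) - G u) \<bullet> (u - x0)
      = (u - x0) \<bullet> G (x0 + t *\<^sub>R (u - x0)) - (u - x0) \<bullet> G u"
    by (simp add: inner_diff_left inner_diff_right inner_commute algebra_simps)
  ultimately show ?thesis by linarith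
qed

text \<open>The radial component of a monotone field grows along rays, so its minimum over a sphere
  around the unique zero bounds it from below outside that sphere.\<close>

lemma monotone_field_coercive:
  fixes G :: "'a::euclidean_space \<Rightarrow> 'a"
  assumes cont: "continuous_on UNIV G"
    and mono: "\<And>x y. (G x - G y) \<bullet> (x - y) \<ge> 0"
    and pos: "\<And>x. x \<noteq> x0 \<Longrightarrow> (x - x0) \<bullet> G x > 0"
    and r: "r > 0"
  shows "\<exists>c>0. \<forall>x. r \<le> norm (x - x0) \<longrightarrow> c \<le> (x - x0) \<bullet> G x"
proof -
  obtain b :: 'a where b: "b \<in> Basis" using nonempty_Basis by blast
  then have "x0 + r *\<^sub>R b \<in> sphere x0 r" using r by (simp add: dist_norm)
  moreover have "continuous_on (sphere x0 r) (\<lambda>x. (x - x0) \<bullet> G x)"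
    using cont by (intro continuous_intros) (auto intro: continuous_on_subset)
  ultimately obtain u0 where u0: "u0 \<in> sphere x0 r"
    and u0_min: "\<And>u. u \<in> sphere x0 r \<Longrightarrow> (u0 - x0) \<bullet> G u0 \<le> (u - x0) \<bullet> G u"
    using continuous_attains_inf[OF compact_sphere] by blast
  have c: "(u0 - x0) \<bullet> G u0 > 0"
    using u0 r by (intro pos) auto
  show ?thesis
  proof (intro exI[of _ "(u0 - x0) \<bullet> G u0"] conjI allI impI c)
    fix x assume x: "r \<le> norm (x - x0)"
    define t where "t = norm (x - x0) / r"
    define u where "u = x0 + (1 / t) *\<^sub>R (x - x0)"
    have x_ne: "x \<noteq> x0" using x r by auto
    then have t: "t \<ge> 1" using x r by (simp add: t_def)
    have x_eq: "x = x0 + t *\<^sub>R (u - x0)" using t by (simp add: u_def)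
    have "u \<in> sphere x0 r" using x_ne r by (simp add: u_def t_def dist_norm)
    then have "(u0 - x0) \<bullet> G u0 \<le> (u - x0) \<bullet> G u" by (rule u0_min)
    also have "\<dots> \<le> (u - x0) \<bullet> G x"
      using monotone_field_ray[OF mono t] by (simp add: x_eq)
    also have "\<dots> \<le> t * ((u - x0) \<bullet> G x)"
      using t calculation c by (smt (verit) mult_le_cancel_right1)
    also have "\<dots> = (x - x0) \<bullet> G x" by (simp add: x_eq)
    finally show "(u0 - x0) \<bullet> G u0 \<le> (x - x0) \<bullet> G x" .
  qed
qed

text \<open>The shifted iterate w descends by a fixed multiple of the step size while w - e is far
  from x0. Since the step sizes are not summable it comes near x0, and steps that are short
  compared to the distance r keep it near.\<close>

lemma perturbed_descent_eventually_near:
  fixes w e d :: "nat \<Rightarrow> 'a::real_inner"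
  assumes w_step: "\<And>n. n \<ge> m \<Longrightarrow> w (Suc n) = w n - g n *\<^sub>R d n"
    and bounded: "\<And>n. n \<ge> m \<Longrightarrow> norm (d n) \<le> B"
    and small: "\<And>n. n \<ge> m \<Longrightarrow> 2 * norm (e n) * B + g n * B\<^sup>2 < c \<and> norm (e n) < r / 2 \<and> g n * B < r / 2"
    and drift: "\<And>n. n \<ge> m \<Longrightarrow> r \<le> norm (w n - e n - x0) \<Longrightarrow> c \<le> (w n - e n - x0) \<bullet> d n"
    and g_pos: "\<And>n. g n > 0" and g_not_summable: "\<not> summable g" and c: "c > 0"
  shows "\<exists>n2. \<forall>n\<ge>n2. norm (w n - x0) \<le> 2 * r"
proof -
  have far_descent: "(norm (w (Suc n) - x0))\<^sup>2 \<le> (norm (w n - x0))\<^sup>2 - c * g n"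
    if n: "n \<ge> m" and far: "r \<le> norm (w n - e n - x0)" for n
    using perturbed_descent_step[OF drift[OF n far] bounded[OF n], of "g n"] small[OF n] g_pos[of n]
    by (simp add: w_step[OF n])
  have "\<exists>n\<ge>m. norm (w n - e n - x0) < r"
    by (rule not_summable_descent_reaches[where D = "\<lambda>n. (norm (w n - x0))\<^sup>2"])
      (use far_descent c g_pos g_not_summable in \<open>auto simp: not_less less_imp_le\<close>)
  then obtain n2 where n2: "n2 \<ge> m" and near: "norm (w n2 - e n2 - x0) < r" by blast
  have w_close: "norm (w n - x0) \<le> norm (w n - e n - x0) + norm (e n)" for n
    using norm_triangle_ineq[of "w n - e n - x0" "e n"] by simp
  have "norm (w n - x0) \<le> 2 * r" if "n \<ge> n2" for n
    using that
  proof (induction n rule: dec_induct)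
    case base
    show ?case using w_close[of n2] near small[OF n2] norm_ge_zero[of "e n2"] by linarith
  next
    case (step n)
    then have n: "n \<ge> m" using n2 by simp
    show ?case
    proof (cases "r \<le> norm (w n - e n - x0)")
      case True
      have "0 < c * g n" using c g_pos[of n] by simp
      then have "(norm (w (Suc n) - x0))\<^sup>2 \<le> (norm (w n - x0))\<^sup>2"
        using far_descent[OF n True] by linarith
      then have "norm (w (Suc n) - x0) \<le> norm (w n - x0)" by (rule power2_le_imp_le) simp
      then show ?thesis using step.IH by linarith
    next
      case False
      have "norm (w (Suc n) - x0) = norm ((w n - x0) - g n *\<^sub>R d n)"
        unfolding w_step[OF n] by (simp add: algebra_simps)
      also have "\<dots> \<le> norm (w n - x0) + g n * norm (d n)"
        using norm_triangle_ineq4[of "w n - x0" "g n *\<^sub>R d n"] g_pos[of n] by simp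
      also have "\<dots> \<le> norm (w n - e n - x0) + norm (e n) + g n * B"
        using w_close[of n] mult_left_mono[OF bounded[OF n] less_imp_le[OF g_pos[of n]]] by linarith
      finally show ?thesis using False small[OF n] by linarith
    qed
  qed
  then show ?thesis by blast
qed

text \<open>Along a path on which the accumulated noise W converges, the shifted iterate
  w = v + (W - lim W) performs exact descent steps evaluated at v = w - (W - lim W).\<close>

lemma perturbed_descent_tendsto:
  fixes v W :: "nat \<Rightarrow> 'a::real_inner" and Gf :: "'a \<Rightarrow> 'a" and g :: "nat \<Rightarrow> real"
  assumes step: "\<And>n. n \<ge> n0 \<Longrightarrow> v (Suc n) = v n - g n *\<^sub>R Gf (v n) - (W (Suc n) - W n)"
    and bounded: "\<And>n. n \<ge> n0 \<Longrightarrow> norm (Gf (v n)) \<le> B"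
    and W: "W \<longlonglongrightarrow> W_lim"
    and g_pos: "\<And>n. g n > 0" and g_lim: "g \<longlonglongrightarrow> 0" and g_not_summable: "\<not> summable g"
    and coercive: "\<And>r. r > 0 \<Longrightarrow> \<exists>c>0. \<forall>x. r \<le> norm (x - x0) \<longrightarrow> c \<le> (x - x0) \<bullet> Gf x"
  shows "v \<longlonglongrightarrow> x0"
proof (rule LIMSEQ_I)
  fix eps :: real assume eps: "eps > 0"
  define r where "r = eps / 4"
  have r: "r > 0" using eps by (simp add: r_def)
  define e where "e n = W n - W_lim" for n
  define w where "w n = v n + e n" for n
  have e_zero: "e \<longlonglongrightarrow> 0" unfolding e_def using W by (rule LIM_zero)
  obtain c where c: "c > 0" and drift: "\<And>x. r \<le> norm (x - x0) \<Longrightarrow> c \<le> (x - x0) \<bullet> Gf x"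
    using coercive[OF r] by blast
  have "(\<lambda>n. 2 * norm (e n) * B + g n * B\<^sup>2) \<longlonglongrightarrow> 0" "(\<lambda>n. g n * B) \<longlonglongrightarrow> 0" "(\<lambda>n. norm (e n)) \<longlonglongrightarrow> 0"
    using e_zero g_lim by (auto intro!: tendsto_eq_intros)
  then have "eventually (\<lambda>n. (2 * norm (e n) * B + g n * B\<^sup>2 < c \<and> norm (e n) < r / 2 \<and> g n * B < r / 2)
      \<and> n \<ge> n0) sequentially"
    using c r by (intro eventually_conj eventually_ge_at_top order_tendstoD) auto
  then obtain n1 where n1: "\<And>n. n \<ge> n1 \<Longrightarrow> (2 * norm (e n) * B + g n * B\<^sup>2 < c
      \<and> norm (e n) < r / 2 \<and> g n * B < r / 2) \<and> n \<ge> n0"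
    by (auto simp: eventually_sequentially)
  have "\<exists>n2. \<forall>n\<ge>n2. norm (w n - x0) \<le> 2 * r"
  proof (rule perturbed_descent_eventually_near[where d = "\<lambda>n. Gf (v n)" and e = e and m = n1
        and B = B and c = c and g = g])
    show "w (Suc n) = w n - g n *\<^sub>R Gf (v n)" if "n \<ge> n1" for n
      using step[of n] n1[OF that] by (simp add: w_def e_def algebra_simps)
    show "norm (Gf (v n)) \<le> B" if "n \<ge> n1" for n
      using bounded n1[OF that] by blast
    show "c \<le> (w n - e n - x0) \<bullet> Gf (v n)" if "n \<ge> n1" "r \<le> norm (w n - e n - x0)" for n
      using drift that by (simp add: w_def)
  qed (use n1 g_pos g_not_summable c in auto)
  then obtain n2 where n2: "\<And>n. n \<ge> n2 \<Longrightarrow> norm (w n - x0) \<le> 2 * r" by blast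
  show "\<exists>no. \<forall>n\<ge>no. norm (v n - x0) < eps"
  proof (intro exI[of _ "max n1 n2"] allI impI)
    fix n assume "max n1 n2 \<le> n"
    then have "norm (w n - x0) \<le> 2 * r" "norm (e n) < r / 2" using n1[of n] n2[of n] by auto
    moreover have "norm (v n - x0) \<le> norm (w n - x0) + norm (e n)"
      using norm_triangle_ineq4[of "w n - x0" "e n"] by (simp add: w_def algebra_simps)
    ultimately show "norm (v n - x0) < eps" using r by (simp add: r_def)
  qed
qed

section \<open>Second moments, orthogonal increments and almost sure Cauchy sequences\<close>

lemma (in prob_space) second_moment_centered:
  fixes Y :: "'a \<Rightarrow> 'b::euclidean_space"
  assumes Y: "integrable M Y" and Y2: "integrable M (\<lambda>\<omega>. (norm (Y \<omega>))\<^sup>2)"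
  shows "integrable M (\<lambda>\<omega>. (norm (Y \<omega> - expectation Y))\<^sup>2)"
    and "expectation (\<lambda>\<omega>. (norm (Y \<omega> - expectation Y))\<^sup>2)
           = expectation (\<lambda>\<omega>. (norm (Y \<omega>))\<^sup>2) - (norm (expectation Y))\<^sup>2"
proof -
  have expand: "(norm (Y \<omega> - expectation Y))\<^sup>2
      = (norm (Y \<omega>))\<^sup>2 - 2 * (Y \<omega> \<bullet> expectation Y) + (norm (expectation Y))\<^sup>2" for \<omega>
    using power2_norm_add[of "Y \<omega>" "- expectation Y"] by simp
  have Y_inner: "integrable M (\<lambda>\<omega>. Y \<omega> \<bullet> expectation Y)" using Y by simp
  show "integrable M (\<lambda>\<omega>. (norm (Y \<omega> - expectation Y))\<^sup>2)"
    unfolding expand using Y2 Y_inner by simp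
  have "expectation (\<lambda>\<omega>. (norm (Y \<omega> - expectation Y))\<^sup>2)
      = expectation (\<lambda>\<omega>. (norm (Y \<omega>))\<^sup>2) - 2 * (expectation Y \<bullet> expectation Y) + (norm (expectation Y))\<^sup>2"
    unfolding expand using Y2 Y_inner Y by (simp add: prob_space)
  then show "expectation (\<lambda>\<omega>. (norm (Y \<omega> - expectation Y))\<^sup>2)
      = expectation (\<lambda>\<omega>. (norm (Y \<omega>))\<^sup>2) - (norm (expectation Y))\<^sup>2"
    by (simp add: power2_norm_eq_inner)
qed

lemma first_passage_decomposition:
  fixes P :: "nat \<Rightarrow> 'a \<Rightarrow> bool"
  shows "{x\<in>X. \<exists>k\<le>n. P k x} = (\<Union>k\<le>n. {x\<in>X. P k x \<and> (\<forall>i<k. \<not> P i x)})"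
proof safe
  fix x k assume "x \<in> X" "k \<le> n" "P k x"
  moreover obtain k' where "k' \<le> k" "\<forall>i<k'. \<not> P i x" "P k' x"
    using ex_least_nat_le[of "\<lambda>k. P k x", OF \<open>P k x\<close>] by blast
  ultimately show "x \<in> (\<Union>k\<le>n. {x\<in>X. P k x \<and> (\<forall>i<k. \<not> P i x)})" by auto
qed auto

lemma disjoint_family_first_passage:
  fixes P :: "nat \<Rightarrow> 'a \<Rightarrow> bool"
  shows "disjoint_family (\<lambda>k. {x\<in>X. P k x \<and> (\<forall>i<k. \<not> P i x)})"
  unfolding disjoint_family_on_def
proof (intro ballI impI)
  fix k l :: nat assume "k \<noteq> l"
  then show "{x\<in>X. P k x \<and> (\<forall>i<k. \<not> P i x)} \<inter> {x\<in>X. P l x \<and> (\<forall>i<l. \<not> P i x)} = {}"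
    by (cases rule: linorder_neqE_nat) auto
qed

lemma (in prob_space) second_moment_on_mono_of_orthogonal:
  fixes Y Z :: "'a \<Rightarrow> 'b::euclidean_space"
  assumes A: "A \<in> events"
    and Y: "integrable M (\<lambda>\<omega>. (norm (Y \<omega>))\<^sup>2)" and Z: "integrable M (\<lambda>\<omega>. (norm (Z \<omega>))\<^sup>2)"
    and orth_int: "integrable M (\<lambda>\<omega>. (indicator A \<omega> *\<^sub>R Y \<omega>) \<bullet> (Z \<omega> - Y \<omega>))"
    and orth: "(\<integral>\<omega>. (indicator A \<omega> *\<^sub>R Y \<omega>) \<bullet> (Z \<omega> - Y \<omega>) \<partial>M) = 0"
  shows "(\<integral>\<omega>. indicator A \<omega> * (norm (Y \<omega>))\<^sup>2 \<partial>M) \<le> (\<integral>\<omega>. indicator A \<omega> * (norm (Z \<omega>))\<^sup>2 \<partial>M)"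
proof -
  have AY: "integrable M (\<lambda>\<omega>. indicator A \<omega> * (norm (Y \<omega>))\<^sup>2)"
    using integrable_real_mult_indicator[OF A Y] by (simp add: mult.commute)
  have AZ: "integrable M (\<lambda>\<omega>. indicator A \<omega> * (norm (Z \<omega>))\<^sup>2)"
    using integrable_real_mult_indicator[OF A Z] by (simp add: mult.commute)
  have split: "indicator A \<omega> * (norm (Z \<omega>))\<^sup>2 - indicator A \<omega> * (norm (Y \<omega>))\<^sup>2
      - 2 * ((indicator A \<omega> *\<^sub>R Y \<omega>) \<bullet> (Z \<omega> - Y \<omega>)) = indicator A \<omega> * (norm (Z \<omega> - Y \<omega>))\<^sup>2" for \<omega>
    using power2_norm_add[of "Y \<omega>" "Z \<omega> - Y \<omega>"] by (simp add: indicator_def)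
  have "(\<integral>\<omega>. indicator A \<omega> * (norm (Z \<omega>))\<^sup>2 \<partial>M) - (\<integral>\<omega>. indicator A \<omega> * (norm (Y \<omega>))\<^sup>2 \<partial>M)
      - 2 * (\<integral>\<omega>. (indicator A \<omega> *\<^sub>R Y \<omega>) \<bullet> (Z \<omega> - Y \<omega>) \<partial>M)
      = (\<integral>\<omega>. indicator A \<omega> * (norm (Z \<omega> - Y \<omega>))\<^sup>2 \<partial>M)"
    using AY AZ orth_int by (simp add: split[symmetric])
  also have "\<dots> \<ge> 0" by (intro integral_nonneg_AE) auto
  finally show ?thesis using orth by simp
qed

text \<open>Kolmogorov's maximal inequality, in the form that only uses orthogonality of each
  later increment to the process stopped at the first passage time k, i.e. on A k.\<close>

lemma (in prob_space) maximal_inequality_orthogonal_increments: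
  fixes S :: "nat \<Rightarrow> 'a \<Rightarrow> 'b::euclidean_space" and eps :: real
  defines "A \<equiv> \<lambda>k. {\<omega>\<in>space M. eps \<le> norm (S k \<omega>) \<and> (\<forall>i<k. norm (S i \<omega>) < eps)}"
  assumes meas[measurable]: "\<And>k. S k \<in> borel_measurable M"
    and sq_int: "\<And>k. k \<le> n \<Longrightarrow> integrable M (\<lambda>\<omega>. (norm (S k \<omega>))\<^sup>2)"
    and orth_int: "\<And>k. k \<le> n \<Longrightarrow> integrable M (\<lambda>\<omega>. (indicator (A k) \<omega> *\<^sub>R S k \<omega>) \<bullet> (S n \<omega> - S k \<omega>))"
    and orth: "\<And>k. k \<le> n \<Longrightarrow> (\<integral>\<omega>. (indicator (A k) \<omega> *\<^sub>R S k \<omega>) \<bullet> (S n \<omega> - S k \<omega>) \<partial>M) = 0"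
    and eps: "eps > 0"
  shows "prob {\<omega>\<in>space M. \<exists>k\<le>n. eps \<le> norm (S k \<omega>)} \<le> expectation (\<lambda>\<omega>. (norm (S n \<omega>))\<^sup>2) / eps\<^sup>2"
proof -
  have A[measurable]: "A k \<in> events" for k unfolding A_def by measurable
  have first_passage: "{\<omega>\<in>space M. \<exists>k\<le>n. eps \<le> norm (S k \<omega>)} = (\<Union>k\<in>{..n}. A k)"
    using first_passage_decomposition[of "space M" n "\<lambda>k \<omega>. eps \<le> norm (S k \<omega>)"]
    by (simp add: A_def not_le)
  have disj: "disjoint_family A"
    using disjoint_family_first_passage[of "space M" "\<lambda>k \<omega>. eps \<le> norm (S k \<omega>)"]
    by (simp add: A_def not_le)
  then have indicator_sum: "indicator (\<Union>k\<in>{..n}. A k) \<omega> = (\<Sum>k\<le>n. indicator (A k) \<omega> :: real)" for \<omega>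
    by (intro indicator_UN_disjoint) (auto simp: disjoint_family_on_def)
  have Sn: "integrable M (\<lambda>\<omega>. (norm (S n \<omega>))\<^sup>2)" using sq_int by simp
  have "prob (\<Union>k\<in>{..n}. A k) = (\<Sum>k\<le>n. prob (A k))"
    using disj by (intro finite_measure_finite_Union) (auto simp: disjoint_family_on_def)
  then have "eps\<^sup>2 * prob (\<Union>k\<in>{..n}. A k) = (\<Sum>k\<le>n. \<integral>\<omega>. indicator (A k) \<omega> * eps\<^sup>2 \<partial>M)"
    by (simp add: sum_distrib_left mult.commute)
  also have "\<dots> \<le> (\<Sum>k\<le>n. \<integral>\<omega>. indicator (A k) \<omega> * (norm (S k \<omega>))\<^sup>2 \<partial>M)"
  proof (intro sum_mono integral_mono)
    fix k assume "k \<in> {..n}"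
    then show "integrable M (\<lambda>\<omega>. indicator (A k) \<omega> * (norm (S k \<omega>))\<^sup>2)"
      using integrable_real_mult_indicator[OF A sq_int] by (simp add: mult.commute)
    show "indicator (A k) \<omega> * eps\<^sup>2 \<le> indicator (A k) \<omega> * (norm (S k \<omega>))\<^sup>2" for \<omega>
      using eps by (auto simp: A_def indicator_def intro: power_mono)
  qed (use A in \<open>simp add: mult.commute less_top[symmetric]\<close>)
  also have "\<dots> \<le> (\<Sum>k\<le>n. \<integral>\<omega>. indicator (A k) \<omega> * (norm (S n \<omega>))\<^sup>2 \<partial>M)"
    using sq_int orth_int orth by (intro sum_mono second_moment_on_mono_of_orthogonal) auto
  also have "\<dots> = (\<integral>\<omega>. (\<Sum>k\<le>n. indicator (A k) \<omega> * (norm (S n \<omega>))\<^sup>2) \<partial>M)"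
    using integrable_real_mult_indicator[OF A Sn]
    by (subst Bochner_Integration.integral_sum) (auto simp: mult.commute)
  also have "\<dots> = (\<integral>\<omega>. indicator (\<Union>k\<in>{..n}. A k) \<omega> * (norm (S n \<omega>))\<^sup>2 \<partial>M)"
    by (simp only: indicator_sum sum_distrib_right)
  also have "\<dots> \<le> expectation (\<lambda>\<omega>. (norm (S n \<omega>))\<^sup>2)"
    using integrable_real_mult_indicator[OF _ Sn, of "\<Union>k\<in>{..n}. A k"] Sn
    by (intro integral_mono) (auto simp: indicator_def mult.commute)
  finally show ?thesis
    unfolding first_passage using eps by (simp add: field_simps)
qed

lemma (in prob_space) prob_ex_le_of_prefix_bound:
  fixes P :: "nat \<Rightarrow> 'a \<Rightarrow> bool"
  assumes [measurable]: "\<And>k. {\<omega>\<in>space M. P k \<omega>} \<in> events"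
    and bound: "\<And>n. prob {\<omega>\<in>space M. \<exists>k\<le>n. P k \<omega>} \<le> B"
  shows "prob {\<omega>\<in>space M. \<exists>k. P k \<omega>} \<le> B"
proof -
  have "{\<omega>\<in>space M. \<exists>k\<le>n. P k \<omega>} \<in> events" for n by measurable
  moreover have "incseq (\<lambda>n. {\<omega>\<in>space M. \<exists>k\<le>n. P k \<omega>})"
    by (rule incseq_SucI) (auto intro: le_SucI)
  ultimately have "(\<lambda>n. prob {\<omega>\<in>space M. \<exists>k\<le>n. P k \<omega>}) \<longlonglongrightarrow> prob (\<Union>n. {\<omega>\<in>space M. \<exists>k\<le>n. P k \<omega>})"
    by (intro finite_Lim_measure_incseq) auto
  then have "prob (\<Union>n. {\<omega>\<in>space M. \<exists>k\<le>n. P k \<omega>}) \<le> B"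
    by (rule LIMSEQ_le_const2) (use bound in auto)
  moreover have "(\<Union>n. {\<omega>\<in>space M. \<exists>k\<le>n. P k \<omega>}) = {\<omega>\<in>space M. \<exists>k. P k \<omega>}" by auto
  ultimately show ?thesis by simp
qed

lemma (in prob_space) AE_Cauchy_of_tail_prob:
  fixes S :: "nat \<Rightarrow> 'a \<Rightarrow> 'b::{real_normed_vector, second_countable_topology}"
  assumes meas[measurable]: "\<And>n. S n \<in> borel_measurable M"
    and tail: "\<And>eps. eps > 0 \<Longrightarrow> (\<lambda>m. prob {\<omega>\<in>space M. \<exists>k\<ge>m. eps \<le> norm (S k \<omega> - S m \<omega>)}) \<longlonglongrightarrow> 0"
  shows "AE \<omega> in M. Cauchy (\<lambda>n. S n \<omega>)"
proof -
  have "AE \<omega> in M. \<exists>m. \<forall>k\<ge>m. norm (S k \<omega> - S m \<omega>) < 1 / real (Suc q)" for q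
  proof -
    define eps where "eps = 1 / real (Suc q)"
    define Bad where "Bad = {\<omega>\<in>space M. \<forall>m. \<exists>k\<ge>m. eps \<le> norm (S k \<omega> - S m \<omega>)}"
    have Bad: "Bad \<in> events" unfolding Bad_def by measurable
    have "prob Bad \<le> prob {\<omega>\<in>space M. \<exists>k\<ge>m. eps \<le> norm (S k \<omega> - S m \<omega>)}" for m
    proof (rule finite_measure_mono)
      show "Bad \<subseteq> {\<omega>\<in>space M. \<exists>k\<ge>m. eps \<le> norm (S k \<omega> - S m \<omega>)}"
        unfolding Bad_def by blast
      show "{\<omega>\<in>space M. \<exists>k\<ge>m. eps \<le> norm (S k \<omega> - S m \<omega>)} \<in> events" by measurable
    qed
    then have "prob Bad \<le> 0"
      using tail[of eps] by (intro LIMSEQ_le_const) (auto simp: eps_def)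
    then have "Bad \<in> null_sets M"
      using Bad by (simp add: emeasure_eq_measure null_sets_def measure_le_0_iff)
    moreover have "{\<omega>\<in>space M. \<not> (\<exists>m. \<forall>k\<ge>m. norm (S k \<omega> - S m \<omega>) < eps)} \<subseteq> Bad"
      unfolding Bad_def by (auto simp: not_less)
    ultimately show ?thesis
      unfolding eps_def by (rule AE_I')
  qed
  then have "AE \<omega> in M. \<forall>q. \<exists>m. \<forall>k\<ge>m. norm (S k \<omega> - S m \<omega>) < 1 / real (Suc q)"
    by (simp add: AE_all_countable)
  then show ?thesis
  proof (rule eventually_mono)
    fix \<omega> assume close: "\<forall>q. \<exists>m. \<forall>k\<ge>m. norm (S k \<omega> - S m \<omega>) < 1 / real (Suc q)"
    show "Cauchy (\<lambda>n. S n \<omega>)"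
    proof (rule CauchyI)
      fix e :: real assume "e > 0"
      then obtain q where q: "1 / real (Suc q) < e / 2"
        using reals_Archimedean[of "e / 2"] by (auto simp: inverse_eq_divide)
      obtain m where m: "\<And>k. k \<ge> m \<Longrightarrow> norm (S k \<omega> - S m \<omega>) < 1 / real (Suc q)"
        using close by blast
      have "norm (S a \<omega> - S b \<omega>) < e" if "a \<ge> m" "b \<ge> m" for a b
        using norm_triangle_ineq4[of "S a \<omega> - S m \<omega>" "S b \<omega> - S m \<omega>"] m[OF that(1)] m[OF that(2)] q
        by simp
      then show "\<exists>M. \<forall>a\<ge>M. \<forall>b\<ge>M. norm (S a \<omega> - S b \<omega>) < e" by blast
    qed
  qed
qed

section \<open>Losses with bounded positive semidefinite Hessian\<close>

locale loss_setting = R: prob_space \<rho> for \<rho> :: "'z measure" +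
  fixes V :: "'a::euclidean_space \<Rightarrow> 'z \<Rightarrow> real"
    and gradV :: "'a \<Rightarrow> 'z \<Rightarrow> 'a"
    and HV :: "'a \<Rightarrow> 'z \<Rightarrow> 'a \<Rightarrow> 'a"
    and Mb :: real
  assumes V_nonneg: "\<And>f z. z \<in> space \<rho> \<Longrightarrow> V f z \<ge> 0"
    and V_grad: "\<And>f z. z \<in> space \<rho> \<Longrightarrow> ((\<lambda>g. V g z) has_derivative (\<lambda>h. gradV f z \<bullet> h)) (at f)"
    and V_hess: "\<And>f z. z \<in> space \<rho> \<Longrightarrow> ((\<lambda>g. gradV g z) has_derivative HV f z) (at f)"
    and I_finite: "\<And>f. integrable \<rho> (\<lambda>z. V f z)"
    and H_psd: "\<And>f g z. z \<in> space \<rho> \<Longrightarrow> g \<bullet> HV f z g \<ge> 0"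
    and H_bound: "\<And>f z. z \<in> space \<rho> \<Longrightarrow> onorm (HV f z) \<le> Mb"
begin

lemma hessian_bound_nonneg: "Mb \<ge> 0"
proof -
  obtain z where z: "z \<in> space \<rho>" using R.not_empty by blast
  have "bounded_linear (HV 0 z)" using V_hess[OF z] by (rule has_derivative_bounded_linear)
  then show ?thesis using H_bound[OF z, of 0] onorm_pos_le[of "HV 0 z"] by linarith
qed

lemma has_real_derivative_loss_on_line:
  assumes z: "z \<in> space \<rho>"
  shows "((\<lambda>t. V (f + t *\<^sub>R h) z) has_real_derivative gradV (f + t *\<^sub>R h) z \<bullet> h) (at t)"
proof -
  have "((\<lambda>t. f + t *\<^sub>R h) has_derivative (\<lambda>s. s *\<^sub>R h)) (at t)"
    by (auto intro!: derivative_eq_intros)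
  from has_derivative_compose[OF this V_grad[OF z]] show ?thesis
    unfolding has_field_derivative_def by (rule has_derivative_eq_rhs) (auto simp: fun_eq_iff)
qed

lemma has_real_derivative_grad_on_line:
  assumes z: "z \<in> space \<rho>"
  shows "((\<lambda>t. gradV (f + t *\<^sub>R h) z \<bullet> h) has_real_derivative HV (f + t *\<^sub>R h) z h \<bullet> h) (at t)"
proof -
  have "((\<lambda>t. f + t *\<^sub>R h) has_derivative (\<lambda>s. s *\<^sub>R h)) (at t)"
    by (auto intro!: derivative_eq_intros)
  from has_derivative_inner_left[OF has_derivative_compose[OF this V_hess[OF z]]]
  have "((\<lambda>t. gradV (f + t *\<^sub>R h) z \<bullet> h) has_derivative (\<lambda>s. HV (f + t *\<^sub>R h) z (s *\<^sub>R h) \<bullet> h)) (at t)" .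
  moreover have "linear (HV (f + t *\<^sub>R h) z)"
    using V_hess[OF z] has_derivative_linear by blast
  ultimately show ?thesis unfolding has_field_derivative_def
    by (auto simp: fun_eq_iff linear_scale elim: has_derivative_eq_rhs)
qed

lemma hessian_quadratic_form_bounds:
  assumes z: "z \<in> space \<rho>"
  shows "0 \<le> HV f z h \<bullet> h" and "HV f z h \<bullet> h \<le> Mb * (norm h)\<^sup>2"
proof -
  show "0 \<le> HV f z h \<bullet> h" using H_psd[OF z] by (simp add: inner_commute)
  have bl: "bounded_linear (HV f z)" using V_hess[OF z] by (rule has_derivative_bounded_linear)
  have "HV f z h \<bullet> h \<le> norm (HV f z h) * norm h" by (rule norm_cauchy_schwarz)
  also have "\<dots> \<le> (onorm (HV f z) * norm h) * norm h"
    by (intro mult_right_mono onorm[OF bl]) auto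
  also have "\<dots> \<le> (Mb * norm h) * norm h"
    by (intro mult_right_mono H_bound[OF z]) auto
  finally show "HV f z h \<bullet> h \<le> Mb * (norm h)\<^sup>2" by (simp add: power2_eq_square)
qed

lemma grad_on_line_bounds:
  assumes z: "z \<in> space \<rho>" and t: "0 \<le> t"
  shows "gradV f z \<bullet> h \<le> gradV (f + t *\<^sub>R h) z \<bullet> h"
    and "gradV (f + t *\<^sub>R h) z \<bullet> h \<le> gradV f z \<bullet> h + t * (Mb * (norm h)\<^sup>2)"
proof -
  have "\<exists>s. gradV (f + t *\<^sub>R h) z \<bullet> h - gradV f z \<bullet> h = t * (HV (f + s *\<^sub>R h) z h \<bullet> h)"
  proof (cases "t = 0")
    case False
    with t have "0 < t" by simp
    from MVT2[OF this, of "\<lambda>t. gradV (f + t *\<^sub>R h) z \<bullet> h"] has_real_derivative_grad_on_line[OF z]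
    show ?thesis by fastforce
  qed simp
  then obtain s where s: "gradV (f + t *\<^sub>R h) z \<bullet> h - gradV f z \<bullet> h = t * (HV (f + s *\<^sub>R h) z h \<bullet> h)" ..
  show "gradV f z \<bullet> h \<le> gradV (f + t *\<^sub>R h) z \<bullet> h"
    using s t hessian_quadratic_form_bounds(1)[OF z] by (simp add: algebra_simps)
  have "t * (HV (f + s *\<^sub>R h) z h \<bullet> h) \<le> t * (Mb * (norm h)\<^sup>2)"
    using t hessian_quadratic_form_bounds(2)[OF z] by (intro mult_left_mono) auto
  then show "gradV (f + t *\<^sub>R h) z \<bullet> h \<le> gradV f z \<bullet> h + t * (Mb * (norm h)\<^sup>2)"
    using s by simp
qed

lemma loss_taylor_bounds:
  assumes z: "z \<in> space \<rho>"
  shows "gradV f z \<bullet> h \<le> V (f + h) z - V f z"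
    and "V (f + h) z - V f z \<le> gradV f z \<bullet> h + Mb * (norm h)\<^sup>2"
proof -
  obtain s where s: "0 < s" "s < 1" "V (f + h) z - V f z = gradV (f + s *\<^sub>R h) z \<bullet> h"
    using MVT2[of 0 1 "\<lambda>t. V (f + t *\<^sub>R h) z"] has_real_derivative_loss_on_line[OF z] by force
  show "gradV f z \<bullet> h \<le> V (f + h) z - V f z"
    using grad_on_line_bounds(1)[OF z, of s] s by simp
  have "s * (Mb * (norm h)\<^sup>2) \<le> Mb * (norm h)\<^sup>2"
    using s hessian_bound_nonneg by (simp add: mult_left_le_one_le)
  then show "V (f + h) z - V f z \<le> gradV f z \<bullet> h + Mb * (norm h)\<^sup>2"
    using grad_on_line_bounds(2)[OF z, where t = s and f = f and h = h] s by simp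
qed

lemma grad_monotone:
  assumes z: "z \<in> space \<rho>"
  shows "(gradV g z - gradV f z) \<bullet> (g - f) \<ge> 0"
  using grad_on_line_bounds(1)[OF z, of 1 f "g - f"] by (simp add: inner_diff_left)

lemma grad_lipschitz:
  assumes z: "z \<in> space \<rho>"
  shows "norm (gradV f z - gradV g z) \<le> Mb * norm (f - g)"
  by (rule differentiable_bound[of UNIV "\<lambda>x. gradV x z" "\<lambda>x. HV x z"])
     (use V_hess[OF z] H_bound[OF z] in auto)

lemma loss_gradient_step_decrease:
  assumes z: "z \<in> space \<rho>" and t: "0 < t" "Mb * t \<le> 1/2"
  shows "t / 2 * (norm (gradV f z))\<^sup>2 \<le> V f z - V (f - t *\<^sub>R gradV f z) z"
proof -
  have "V (f - t *\<^sub>R gradV f z) z - V f z \<le> - t * (norm (gradV f z))\<^sup>2 + Mb * (t\<^sup>2 * (norm (gradV f z))\<^sup>2)"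
    using loss_taylor_bounds(2)[OF z, of f "- (t *\<^sub>R gradV f z)"] t
    by (simp add: power2_norm_eq_inner power_mult_distrib)
  moreover have "Mb * (t\<^sup>2 * (norm (gradV f z))\<^sup>2) = (Mb * t) * (t * (norm (gradV f z))\<^sup>2)"
    by (simp add: power2_eq_square)
  moreover have "(Mb * t) * (t * (norm (gradV f z))\<^sup>2) \<le> 1/2 * (t * (norm (gradV f z))\<^sup>2)"
    using t by (intro mult_right_mono) auto
  ultimately show ?thesis by simp
qed

end

lemma sgd_cong: "(\<And>i. i < n \<Longrightarrow> zs i = zs' i) \<Longrightarrow> sgd \<gamma> gV zs n = sgd \<gamma> gV zs' n"
  by (induction n) auto

context loss_setting
begin

lemma loss_measurable[measurable]: "(\<lambda>z. V f z) \<in> borel_measurable \<rho>"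
  using I_finite by (rule borel_measurable_integrable)

lemma grad_inner_measurable: "(\<lambda>z. gradV f z \<bullet> b) \<in> borel_measurable \<rho>"
proof (rule borel_measurable_LIMSEQ_real)
  show "(\<lambda>z. (V (f + (1 / real (Suc m)) *\<^sub>R b) z - V f z) / (1 / real (Suc m))) \<in> borel_measurable \<rho>" for m
    by measurable
  have "filterlim (\<lambda>m. 1 / real (Suc m)) (at_right (0::real)) sequentially"
    by (rule tendsto_imp_filterlim_at_right[OF LIMSEQ_Suc[OF lim_1_over_n]]) auto
  then have at0: "filterlim (\<lambda>m. 1 / real (Suc m)) (at (0::real)) sequentially"
    by (rule filterlim_mono) (auto simp: at_le)
  show "(\<lambda>m. (V (f + (1 / real (Suc m)) *\<^sub>R b) z - V f z) / (1 / real (Suc m))) \<longlonglongrightarrow> gradV f z \<bullet> b"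
    if "z \<in> space \<rho>" for z
  proof -
    have "((\<lambda>s. (V (f + (0 + s) *\<^sub>R b) z - V (f + 0 *\<^sub>R b) z) / s) \<longlongrightarrow> gradV (f + 0 *\<^sub>R b) z \<bullet> b) (at 0)"
      using has_real_derivative_loss_on_line[OF that, of f b 0] unfolding DERIV_def .
    from filterlim_compose[OF this at0] show ?thesis by simp
  qed
qed

lemma grad_measurable: "(\<lambda>z. gradV f z) \<in> borel_measurable \<rho>"
  by (rule borel_measurable_euclidean_space[THEN iffD2]) (auto intro: grad_inner_measurable)

lemma measurable_grad_comp:
  assumes "F \<in> borel_measurable Q" "Z \<in> measurable Q \<rho>"
  shows "(\<lambda>x. gradV (F x) (Z x)) \<in> borel_measurable Q"
proof -
  have "continuous_on UNIV (\<lambda>x. gradV x z)" if "z \<in> space \<rho>" for z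
    using V_hess[OF that]
    by (intro differentiable_imp_continuous_on) (auto simp: differentiable_on_def differentiable_def)
  then have "(\<lambda>p. gradV (fst p) (snd p)) \<in> borel_measurable (borel \<Otimes>\<^sub>M \<rho>)"
    using grad_measurable by (intro borel_measurable_caratheodory)
  from measurable_comp[OF measurable_Pair[OF assms] this] show ?thesis
    by (simp add: comp_def)
qed

lemma sgd_measurable:
  "(\<And>i. i < n \<Longrightarrow> Y i \<in> measurable Q \<rho>) \<Longrightarrow> (\<lambda>x. sgd \<gamma> gradV (\<lambda>i. Y i x) n) \<in> borel_measurable Q"
proof (induction n)
  case (Suc n)
  then have "(\<lambda>x. sgd \<gamma> gradV (\<lambda>i. Y i x) n) \<in> borel_measurable Q" by simp
  moreover from this have "(\<lambda>x. gradV (sgd \<gamma> gradV (\<lambda>i. Y i x) n) (Y n x)) \<in> borel_measurable Q"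
    by (rule measurable_grad_comp) (use Suc in simp)
  ultimately show ?case by simp
qed simp

definition mean_grad :: "'a \<Rightarrow> 'a" where
  "mean_grad f = (\<integral>z. gradV f z \<partial>\<rho>)"

text \<open>Integrability of the gradient comes from the first-order bounds
  g \<bullet> b \<le> V (f + b) - V f and -(g \<bullet> b) \<le> V (f - b) - V f with V \<ge> 0.\<close>

lemma integrable_grad: "integrable \<rho> (\<lambda>z. gradV f z)"
proof (rule Bochner_Integration.integrable_bound)
  show "integrable \<rho> (\<lambda>z. \<Sum>b\<in>Basis. V (f + b) z + V (f - b) z + 2 * V f z)"
    by (intro Bochner_Integration.integrable_sum Bochner_Integration.integrable_add
        Bochner_Integration.integrable_mult_right I_finite)
  show "(\<lambda>z. gradV f z) \<in> borel_measurable \<rho>" by (rule grad_measurable)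
  show "AE z in \<rho>. norm (gradV f z) \<le> norm (\<Sum>b\<in>Basis. V (f + b) z + V (f - b) z + 2 * V f z)"
  proof (rule AE_I2)
    fix z assume z: "z \<in> space \<rho>"
    have "\<bar>gradV f z \<bullet> b\<bar> \<le> V (f + b) z + V (f - b) z + 2 * V f z" for b
      using loss_taylor_bounds(1)[OF z, of f b] loss_taylor_bounds(1)[OF z, of f "- b"]
        V_nonneg[OF z, of "f + b"] V_nonneg[OF z, of "f - b"] V_nonneg[OF z, of f]
      by simp
    then have "norm (gradV f z) \<le> (\<Sum>b\<in>Basis. V (f + b) z + V (f - b) z + 2 * V f z)"
      by (intro norm_le_l1[THEN order_trans] sum_mono)
    then show "norm (gradV f z) \<le> norm (\<Sum>b\<in>Basis. V (f + b) z + V (f - b) z + 2 * V f z)"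
      by simp
  qed
qed

lemma has_derivative_risk: "(risk \<rho> V has_derivative (\<lambda>h. mean_grad f \<bullet> h)) (at f)"
proof (rule has_derivative_of_quadratic_remainder)
  show "bounded_linear (\<lambda>h. mean_grad f \<bullet> h)" by (rule bounded_linear_inner_right)
  fix h
  define R where "R z = V (f + h) z - V f z - gradV f z \<bullet> h" for z
  have R_bounds: "0 \<le> R z" "R z \<le> Mb * (norm h)\<^sup>2" if "z \<in> space \<rho>" for z
    using loss_taylor_bounds[OF that, of f h] by (auto simp: R_def)
  have "risk \<rho> V (f + h) - risk \<rho> V f - mean_grad f \<bullet> h = (\<integral>z. R z \<partial>\<rho>)"
    unfolding risk_def mean_grad_def R_def using integrable_grad[of f]
    by (simp add: integral_diff I_finite integral_inner_left)
  moreover have "(\<integral>z. R z \<partial>\<rho>) \<le> (\<integral>z. Mb * (norm h)\<^sup>2 \<partial>\<rho>)"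
    using R_bounds integrable_grad[of f] unfolding R_def
    by (intro integral_mono_AE AE_I2) (auto intro!: Bochner_Integration.integrable_diff I_finite)
  moreover have "0 \<le> (\<integral>z. R z \<partial>\<rho>)"
    using R_bounds by (intro integral_nonneg_AE AE_I2) auto
  ultimately show "\<bar>risk \<rho> V (f + h) - risk \<rho> V f - mean_grad f \<bullet> h\<bar> \<le> Mb * (norm h)\<^sup>2"
    by (simp add: R.prob_space)
qed

lemma mean_grad_diff: "mean_grad f - mean_grad g = (\<integral>z. gradV f z - gradV g z \<partial>\<rho>)"
  unfolding mean_grad_def by (simp add: integral_diff integrable_grad)

lemma mean_grad_lipschitz: "norm (mean_grad f - mean_grad g) \<le> Mb * norm (f - g)"
proof -
  have "norm (mean_grad f - mean_grad g) \<le> (\<integral>z. norm (gradV f z - gradV g z) \<partial>\<rho>)"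
    unfolding mean_grad_diff by (rule integral_norm_bound)
  also have "\<dots> \<le> (\<integral>z. Mb * norm (f - g) \<partial>\<rho>)"
    using grad_lipschitz[of _ f g] integrable_grad
    by (intro integral_mono_AE AE_I2) (auto intro!: Bochner_Integration.integrable_diff)
  finally show ?thesis by (simp add: R.prob_space)
qed

lemma continuous_on_mean_grad: "continuous_on S mean_grad"
  using mean_grad_lipschitz hessian_bound_nonneg
  by (intro lipschitz_on_continuous_on[of Mb] lipschitz_onI) (auto simp: dist_norm)

lemma mean_grad_measurable[measurable]: "mean_grad \<in> borel_measurable borel"
  by (rule borel_measurable_continuous_onI[OF continuous_on_mean_grad])

lemma mean_grad_monotone: "(mean_grad g - mean_grad f) \<bullet> (g - f) \<ge> 0"
proof -
  have "(mean_grad g - mean_grad f) \<bullet> (g - f) = (\<integral>z. (gradV g z - gradV f z) \<bullet> (g - f) \<partial>\<rho>)"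
    unfolding mean_grad_diff by (simp add: integrable_grad)
  also have "\<dots> \<ge> 0" using grad_monotone by (intro integral_nonneg_AE AE_I2) auto
  finally show ?thesis .
qed

text \<open>Positivity of the expected decrease only serves to make it integrable: a non-integrable
  function has Bochner integral 0.\<close>

lemma grad_second_moment_le:
  assumes t: "0 < t" "Mb * t \<le> 1/2"
    and decrease: "0 < (\<integral>z. V f z - V (f - t *\<^sub>R gradV f z) z \<partial>\<rho>)"
      "(\<integral>z. V f z - V (f - t *\<^sub>R gradV f z) z \<partial>\<rho>) \<le> C * t"
  shows "integrable \<rho> (\<lambda>z. (norm (gradV f z))\<^sup>2)" and "(\<integral>z. (norm (gradV f z))\<^sup>2 \<partial>\<rho>) \<le> 2 * C"
proof -
  define D where "D z = V f z - V (f - t *\<^sub>R gradV f z) z" for z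
  have D_int: "integrable \<rho> D"
    using decrease(1) not_integrable_integral_eq unfolding D_def by fastforce
  have pointwise: "(norm (gradV f z))\<^sup>2 \<le> 2 / t * D z" if "z \<in> space \<rho>" for z
    using loss_gradient_step_decrease[OF that t] t by (simp add: D_def field_simps)
  show grad2_int: "integrable \<rho> (\<lambda>z. (norm (gradV f z))\<^sup>2)"
  proof (rule Bochner_Integration.integrable_bound[OF integrable_mult_right[OF D_int, of "2 / t"]])
    show "(\<lambda>z. (norm (gradV f z))\<^sup>2) \<in> borel_measurable \<rho>" using grad_measurable[of f] by measurable
    show "AE z in \<rho>. norm ((norm (gradV f z))\<^sup>2) \<le> norm (2 / t * D z)"
      using pointwise by (intro AE_I2) (smt (verit) real_norm_def zero_le_power2)
  qed
  have "(\<integral>z. (norm (gradV f z))\<^sup>2 \<partial>\<rho>) \<le> (\<integral>z. 2 / t * D z \<partial>\<rho>)"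
    using pointwise by (intro integral_mono_AE grad2_int integrable_mult_right D_int AE_I2)
  also have "\<dots> = 2 / t * (\<integral>z. D z \<partial>\<rho>)" by simp
  also have "\<dots> \<le> 2 / t * (C * t)"
    using decrease(2) t by (intro mult_left_mono) (auto simp: D_def)
  finally show "(\<integral>z. (norm (gradV f z))\<^sup>2 \<partial>\<rho>) \<le> 2 * C" using t by simp
qed

end

section \<open>Independent identically distributed samples\<close>

locale iid_sequence = P: prob_space M + R: prob_space \<rho>
  for M :: "'w measure" and \<rho> :: "'z measure" +
  fixes X :: "nat \<Rightarrow> 'w \<Rightarrow> 'z"
  assumes X_meas[measurable]: "\<And>i. X i \<in> measurable M \<rho>"
    and X_distr: "\<And>i. distr M \<rho> (X i) = \<rho>"
    and X_indep: "P.indep_vars (\<lambda>_. \<rho>) X UNIV"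
begin

abbreviation sample :: "'w \<Rightarrow> nat \<Rightarrow> 'z" where
  "sample \<omega> \<equiv> \<lambda>i. X i \<omega>"

abbreviation past_space :: "nat \<Rightarrow> (nat \<Rightarrow> 'z) measure" where
  "past_space j \<equiv> Pi\<^sub>M {..<j} (\<lambda>_. \<rho>)"

definition past :: "nat \<Rightarrow> 'w \<Rightarrow> nat \<Rightarrow> 'z" where
  "past j \<omega> = restrict (sample \<omega>) {..<j}"

definition past_distr :: "nat \<Rightarrow> (nat \<Rightarrow> 'z) measure" where
  "past_distr j = distr M (past_space j) (past j)"

lemma measurable_past[measurable]: "past j \<in> measurable M (past_space j)"
  unfolding past_def by (intro measurable_restrict X_meas)

lemma past_apply: "i < j \<Longrightarrow> past j \<omega> i = X i \<omega>"
  by (simp add: past_def)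

lemma restrict_past: "k \<le> j \<Longrightarrow> restrict (past j \<omega>) {..<k} = past k \<omega>"
  by (auto simp: past_def fun_eq_iff)

lemma space_past_spaceD: "s \<in> space (past_space j) \<Longrightarrow> i < j \<Longrightarrow> s i \<in> space \<rho>"
  by (auto simp: space_PiM)

lemma measurable_past_component: "i < j \<Longrightarrow> (\<lambda>s. s i) \<in> measurable (past_space j) \<rho>"
  by (rule measurable_component_singleton) simp

lemma sets_past_distr: "sets (past_distr j) = sets (past_space j)"
  and space_past_distr: "space (past_distr j) = space (past_space j)"
  by (simp_all add: past_distr_def)

lemma prob_space_past_distr: "prob_space (past_distr j)"
  unfolding past_distr_def by (rule P.prob_space_distr[OF measurable_past])

lemma integrable_past_distrI:
  fixes f :: "(nat \<Rightarrow> 'z) \<Rightarrow> real"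
  assumes "f \<in> borel_measurable (past_space j)" and "integrable M (\<lambda>\<omega>. f (past j \<omega>))"
  shows "integrable (past_distr j) f"
  unfolding past_distr_def using integrable_distr_eq[OF measurable_past assms(1)] assms(2) by simp

lemma distr_past_current:
  "distr M (past_space j \<Otimes>\<^sub>M \<rho>) (\<lambda>\<omega>. (past j \<omega>, X j \<omega>)) = past_distr j \<Otimes>\<^sub>M \<rho>"
proof -
  define now where "now \<omega> = restrict (sample \<omega>) {j}" for \<omega>
  let ?now_space = "Pi\<^sub>M {j} (\<lambda>_. \<rho>)"
  have now_meas: "now \<in> measurable M ?now_space"
    unfolding now_def by (intro measurable_restrict X_meas)
  have eval: "(\<lambda>y. y j) \<in> measurable ?now_space \<rho>"
    by (rule measurable_component_singleton) simp
  have "P.indep_var (past_space j) (past j) ?now_space now"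
    unfolding past_def now_def by (rule P.indep_var_restrict[OF X_indep]) auto
  then have indep: "past_distr j \<Otimes>\<^sub>M distr M ?now_space now
      = distr M (past_space j \<Otimes>\<^sub>M ?now_space) (\<lambda>\<omega>. (past j \<omega>, now \<omega>))"
    unfolding past_distr_def by (simp add: P.indep_var_distribution_eq)
  have now_distr: "distr (distr M ?now_space now) \<rho> (\<lambda>y. y j) = \<rho>"
    using distr_distr[OF eval now_meas] X_distr[of j] by (simp add: comp_def now_def)
  have "past_distr j \<Otimes>\<^sub>M \<rho>
      = distr (past_distr j) (past_space j) (\<lambda>x. x) \<Otimes>\<^sub>M distr (distr M ?now_space now) \<rho> (\<lambda>y. y j)"
    unfolding now_distr using distr_id2[OF sets_past_distr[symmetric]] by simp
  also have "\<dots> = distr (past_distr j \<Otimes>\<^sub>M distr M ?now_space now) (past_space j \<Otimes>\<^sub>M \<rho>) (\<lambda>(x, y). (x, y j))"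
  proof (rule pair_measure_distr)
    show "sigma_finite_measure (distr (distr M ?now_space now) \<rho> (\<lambda>y. y j))"
      unfolding now_distr by unfold_locales
    show "(\<lambda>x. x) \<in> measurable (past_distr j) (past_space j)"
      by (simp add: measurable_cong_sets[OF sets_past_distr refl])
    show "(\<lambda>y. y j) \<in> measurable (distr M ?now_space now) \<rho>" using eval by simp
  qed
  also have "\<dots> = distr M (past_space j \<Otimes>\<^sub>M \<rho>) ((\<lambda>(x, y). (x, y j)) \<circ> (\<lambda>\<omega>. (past j \<omega>, now \<omega>)))"
  proof -
    have "(\<lambda>(x, y). (x, y j)) \<in> measurable (past_space j \<Otimes>\<^sub>M ?now_space) (past_space j \<Otimes>\<^sub>M \<rho>)"
      using eval by measurable
    moreover have "(\<lambda>\<omega>. (past j \<omega>, now \<omega>)) \<in> measurable M (past_space j \<Otimes>\<^sub>M ?now_space)"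
      using now_meas by measurable
    ultimately show ?thesis unfolding indep by (rule distr_distr)
  qed
  also have "(\<lambda>(x, y). (x, y j)) \<circ> (\<lambda>\<omega>. (past j \<omega>, now \<omega>)) = (\<lambda>\<omega>. (past j \<omega>, X j \<omega>))"
    by (simp add: comp_def now_def)
  finally show ?thesis ..
qed

lemma past_current_Fubini:
  fixes q :: "(nat \<Rightarrow> 'z) \<times> 'z \<Rightarrow> real"
  assumes q: "q \<in> borel_measurable (past_space j \<Otimes>\<^sub>M \<rho>)"
    and sections: "\<And>s. s \<in> space (past_space j) \<Longrightarrow> integrable \<rho> (\<lambda>z. q (s, z))"
    and bound: "\<And>s. s \<in> space (past_space j) \<Longrightarrow> (\<integral>z. norm (q (s, z)) \<partial>\<rho>) \<le> B s"
    and B: "integrable (past_distr j) B"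
  shows "integrable M (\<lambda>\<omega>. q (past j \<omega>, X j \<omega>))"
    and "(\<integral>\<omega>. q (past j \<omega>, X j \<omega>) \<partial>M) = (\<integral>s. (\<integral>z. q (s, z) \<partial>\<rho>) \<partial>past_distr j)"
proof -
  interpret D: prob_space "past_distr j" by (rule prob_space_past_distr)
  interpret DR: pair_sigma_finite "past_distr j" \<rho> by unfold_locales
  have pair_meas: "(\<lambda>\<omega>. (past j \<omega>, X j \<omega>)) \<in> measurable M (past_space j \<Otimes>\<^sub>M \<rho>)"
    by measurable
  have q': "q \<in> borel_measurable (past_distr j \<Otimes>\<^sub>M \<rho>)"
    using q by (simp add: measurable_cong_sets[OF sets_pair_measure_cong[OF sets_past_distr refl] refl])
  have "integrable (past_distr j \<Otimes>\<^sub>M \<rho>) q"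
  proof (rule DR.Fubini_integrable[OF q'])
    show "integrable (past_distr j) (\<lambda>s. \<integral>z. norm (q (s, z)) \<partial>\<rho>)"
    proof (rule Bochner_Integration.integrable_bound[OF B])
      show "(\<lambda>s. \<integral>z. norm (q (s, z)) \<partial>\<rho>) \<in> borel_measurable (past_distr j)"
        using q' by measurable
      show "AE s in past_distr j. norm (\<integral>z. norm (q (s, z)) \<partial>\<rho>) \<le> norm (B s)"
      proof (rule AE_I2)
        fix s assume "s \<in> space (past_distr j)"
        then have "(\<integral>z. norm (q (s, z)) \<partial>\<rho>) \<le> B s" using bound by (simp add: space_past_distr)
        moreover have "0 \<le> (\<integral>z. norm (q (s, z)) \<partial>\<rho>)" by simp
        ultimately show "norm (\<integral>z. norm (q (s, z)) \<partial>\<rho>) \<le> norm (B s)" by simp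
      qed
    qed
    show "AE s in past_distr j. integrable \<rho> (\<lambda>z. q (s, z))"
      using sections by (intro AE_I2) (simp add: space_past_distr)
  qed
  then have q_int: "integrable (distr M (past_space j \<Otimes>\<^sub>M \<rho>) (\<lambda>\<omega>. (past j \<omega>, X j \<omega>))) q"
    by (simp add: distr_past_current)
  then show "integrable M (\<lambda>\<omega>. q (past j \<omega>, X j \<omega>))"
    using integrable_distr_eq[OF pair_meas q] by simp
  have "(\<integral>\<omega>. q (past j \<omega>, X j \<omega>) \<partial>M) = integral\<^sup>L (past_distr j \<Otimes>\<^sub>M \<rho>) q"
    using integral_distr[OF pair_meas q] by (simp add: distr_past_current)
  also have "\<dots> = (\<integral>s. (\<integral>z. q (s, z) \<partial>\<rho>) \<partial>past_distr j)"
    using \<open>integrable (past_distr j \<Otimes>\<^sub>M \<rho>) q\<close> by (rule DR.integral_fst'[symmetric])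
  finally show "(\<integral>\<omega>. q (past j \<omega>, X j \<omega>) \<partial>M) = (\<integral>s. (\<integral>z. q (s, z) \<partial>\<rho>) \<partial>past_distr j)" .
qed

end

section \<open>Stochastic gradient descent\<close>

locale sgd_setting = iid_sequence M \<rho> X + loss_setting \<rho> V gradV HV Mb
  for M :: "'w measure" and \<rho> :: "'z measure" and X :: "nat \<Rightarrow> 'w \<Rightarrow> 'z"
    and V :: "'a::euclidean_space \<Rightarrow> 'z \<Rightarrow> real" and gradV :: "'a \<Rightarrow> 'z \<Rightarrow> 'a"
    and HV :: "'a \<Rightarrow> 'z \<Rightarrow> 'a \<Rightarrow> 'a" and Mb :: real +
  fixes fK :: 'a and \<gamma> :: "nat \<Rightarrow> real" and C :: real and N :: nat
  assumes fK_unique: "\<And>f. f \<noteq> fK \<Longrightarrow>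
      \<exists>g. (risk \<rho> V has_derivative (\<lambda>h. g \<bullet> h)) (at f) \<and> (f - fK) \<bullet> g > 0"
    and \<gamma>_pos: "\<And>n. \<gamma> n > 0"
    and \<gamma>_sum: "\<not> summable \<gamma>"
    and \<gamma>_sq: "summable (\<lambda>n. (\<gamma> n)\<^sup>2)"
    and C_pos: "C > 0"
    and stab: "\<And>n zs. n > N \<Longrightarrow> (\<forall>i. zs i \<in> space \<rho>) \<Longrightarrow>
      0 < (\<integral>z. V (sgd \<gamma> gradV zs n) z - V (sgd \<gamma> gradV zs n - \<gamma> n *\<^sub>R gradV (sgd \<gamma> gradV zs n) z) z \<partial>\<rho>)
      \<and> (\<integral>z. V (sgd \<gamma> gradV zs n) z - V (sgd \<gamma> gradV zs n - \<gamma> n *\<^sub>R gradV (sgd \<gamma> gradV zs n) z) z \<partial>\<rho>) \<le> C * \<gamma> n"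
begin

lemma mean_grad_pos: "f \<noteq> fK \<Longrightarrow> (f - fK) \<bullet> mean_grad f > 0"
proof -
  assume "f \<noteq> fK"
  then obtain g where g: "(risk \<rho> V has_derivative (\<lambda>h. g \<bullet> h)) (at f)" "(f - fK) \<bullet> g > 0"
    using fK_unique by blast
  have "(\<lambda>h. g \<bullet> h) = (\<lambda>h. mean_grad f \<bullet> h)"
    by (rule has_derivative_unique[OF g(1) has_derivative_risk])
  then have "g = mean_grad f" by (simp add: fun_eq_iff vector_eq_rdot)
  with g show ?thesis by simp
qed

lemma mean_grad_coercive: "r > 0 \<Longrightarrow> \<exists>c>0. \<forall>x. r \<le> norm (x - fK) \<longrightarrow> c \<le> (x - fK) \<bullet> mean_grad x"
  by (rule monotone_field_coercive[OF continuous_on_mean_grad mean_grad_monotone mean_grad_pos])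

lemma step_size_tendsto_zero: "\<gamma> \<longlonglongrightarrow> 0"
proof -
  have "(\<lambda>n. sqrt ((\<gamma> n)\<^sup>2)) \<longlonglongrightarrow> sqrt 0"
    by (intro tendsto_real_sqrt summable_LIMSEQ_zero[OF \<gamma>_sq])
  then show ?thesis using \<gamma>_pos by (simp add: less_imp_le)
qed

text \<open>From this index on the stability bound applies and the steps are short enough for
  the descent estimate of a single gradient step.\<close>

definition burn_in :: nat where
  "burn_in = (SOME n. N < n \<and> (\<forall>m\<ge>n. Mb * \<gamma> m \<le> 1/2))"

lemma burn_in: "N < burn_in" "\<And>n. burn_in \<le> n \<Longrightarrow> Mb * \<gamma> n \<le> 1/2"
proof -
  have "eventually (\<lambda>n. Mb * \<gamma> n < 1/2) sequentially"
    using tendsto_mult_right_zero[OF step_size_tendsto_zero, of Mb] by (intro order_tendstoD) auto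
  then obtain n0 where "\<And>n. n \<ge> n0 \<Longrightarrow> Mb * \<gamma> n < 1/2" by (auto simp: eventually_sequentially)
  then have "\<exists>n. N < n \<and> (\<forall>m\<ge>n. Mb * \<gamma> m \<le> 1/2)"
    by (intro exI[of _ "max n0 (Suc N)"]) (auto simp: less_imp_le)
  from someI_ex[OF this] show "N < burn_in" "\<And>n. burn_in \<le> n \<Longrightarrow> Mb * \<gamma> n \<le> 1/2"
    unfolding burn_in_def by auto
qed

lemma sgd_grad_moments:
  assumes n: "burn_in \<le> n" and s: "\<And>i. i < n \<Longrightarrow> s i \<in> space \<rho>"
  defines "f \<equiv> sgd \<gamma> gradV s n"
  shows "integrable \<rho> (\<lambda>z. (norm (gradV f z - mean_grad f))\<^sup>2)"
    and "(\<integral>z. (norm (gradV f z - mean_grad f))\<^sup>2 \<partial>\<rho>) \<le> 2 * C"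
    and "(norm (mean_grad f))\<^sup>2 \<le> 2 * C"
proof -
  obtain z0 where z0: "z0 \<in> space \<rho>" using R.not_empty by blast
  define s' where "s' i = (if i < n then s i else z0)" for i
  have f_eq: "f = sgd \<gamma> gradV s' n" unfolding f_def by (rule sgd_cong) (simp add: s'_def)
  have "\<forall>i. s' i \<in> space \<rho>" using s z0 by (simp add: s'_def)
  then have decrease: "0 < (\<integral>z. V f z - V (f - \<gamma> n *\<^sub>R gradV f z) z \<partial>\<rho>)"
      "(\<integral>z. V f z - V (f - \<gamma> n *\<^sub>R gradV f z) z \<partial>\<rho>) \<le> C * \<gamma> n"
    using stab[of n s'] burn_in(1) n unfolding f_eq by auto
  note grad2 = grad_second_moment_le[OF \<gamma>_pos burn_in(2)[OF n] decrease]
  note centered = R.second_moment_centered[OF integrable_grad grad2(1), folded mean_grad_def]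
  show "integrable \<rho> (\<lambda>z. (norm (gradV f z - mean_grad f))\<^sup>2)" by (rule centered(1))
  show "(\<integral>z. (norm (gradV f z - mean_grad f))\<^sup>2 \<partial>\<rho>) \<le> 2 * C"
    using centered(2) grad2(2) zero_le_power2[of "norm (mean_grad f)"] by linarith
  have "0 \<le> (\<integral>z. (norm (gradV f z - mean_grad f))\<^sup>2 \<partial>\<rho>)" by simp
  then show "(norm (mean_grad f))\<^sup>2 \<le> 2 * C"
    using centered(2) grad2(2) by linarith
qed

definition noise :: "nat \<Rightarrow> (nat \<Rightarrow> 'z) \<Rightarrow> 'a" where
  "noise n s = \<gamma> n *\<^sub>R (gradV (sgd \<gamma> gradV s n) (s n) - mean_grad (sgd \<gamma> gradV s n))"

definition noise_sum :: "nat \<Rightarrow> nat \<Rightarrow> (nat \<Rightarrow> 'z) \<Rightarrow> 'a" where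
  "noise_sum m k s = (\<Sum>i\<in>{m..<k}. noise i s)"

lemma sgd_Suc_noise:
  "sgd \<gamma> gradV s (Suc n) = sgd \<gamma> gradV s n - \<gamma> n *\<^sub>R mean_grad (sgd \<gamma> gradV s n) - noise n s"
  by (simp add: noise_def scaleR_diff_right)

lemma noise_sum_cong: "(\<And>i. i < k \<Longrightarrow> s i = s' i) \<Longrightarrow> noise_sum m k s = noise_sum m k s'"
proof -
  assume eq: "\<And>i. i < k \<Longrightarrow> s i = s' i"
  have "noise i s = noise i s'" if "i < k" for i
    using that eq sgd_cong[of i s s' \<gamma> gradV] by (simp add: noise_def)
  then show ?thesis unfolding noise_sum_def by (intro sum.cong) auto
qed

lemma noise_sum_split: "m \<le> k \<Longrightarrow> k \<le> n \<Longrightarrow> noise_sum m n s = noise_sum m k s + noise_sum k n s"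
  unfolding noise_sum_def by (simp add: sum.atLeastLessThan_concat)

lemma noise_sum_Suc: "m \<le> k \<Longrightarrow> noise_sum m (Suc k) s = noise_sum m k s + noise k s"
  unfolding noise_sum_def by simp

lemma noise_measurable:
  assumes "\<And>i. i \<le> n \<Longrightarrow> Y i \<in> measurable Q \<rho>"
  shows "(\<lambda>x. noise n (\<lambda>i. Y i x)) \<in> borel_measurable Q"
proof -
  have sgd: "(\<lambda>x. sgd \<gamma> gradV (\<lambda>i. Y i x) n) \<in> borel_measurable Q"
    by (rule sgd_measurable) (use assms in auto)
  moreover have "(\<lambda>x. gradV (sgd \<gamma> gradV (\<lambda>i. Y i x) n) (Y n x)) \<in> borel_measurable Q"
    by (rule measurable_grad_comp[OF sgd assms]) simp
  ultimately show ?thesis unfolding noise_def by measurable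
qed

lemma noise_sum_measurable:
  "(\<And>i. i < k \<Longrightarrow> Y i \<in> measurable Q \<rho>) \<Longrightarrow> (\<lambda>x. noise_sum m k (\<lambda>i. Y i x)) \<in> borel_measurable Q"
  unfolding noise_sum_def by (intro borel_measurable_sum noise_measurable) auto

lemma noise_sum_measurable_sample[measurable]: "(\<lambda>\<omega>. noise_sum m k (sample \<omega>)) \<in> borel_measurable M"
  by (rule noise_sum_measurable) (rule X_meas)

lemma noise_sum_measurable_past:
  "k \<le> j \<Longrightarrow> noise_sum m k \<in> borel_measurable (past_space j)"
  using noise_sum_measurable[of k "\<lambda>i s. s i" "past_space j" m] measurable_past_component by simp

lemma noise_sum_past: "k \<le> j \<Longrightarrow> noise_sum m k (past j \<omega>) = noise_sum m k (sample \<omega>)"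
  by (rule noise_sum_cong) (simp add: past_apply)

lemma noise_past_current:
  "noise j (sample \<omega>) = \<gamma> j *\<^sub>R (gradV (sgd \<gamma> gradV (past j \<omega>) j) (X j \<omega>) - mean_grad (sgd \<gamma> gradV (past j \<omega>) j))"
  using sgd_cong[of j "past j \<omega>" "sample \<omega>" \<gamma> gradV] by (simp add: noise_def past_apply)

lemma measurable_centered_grad_past:
  "(\<lambda>p. gradV (sgd \<gamma> gradV (fst p) j) (snd p) - mean_grad (sgd \<gamma> gradV (fst p) j))
     \<in> borel_measurable (past_space j \<Otimes>\<^sub>M \<rho>)"
proof -
  have sgd: "(\<lambda>p. sgd \<gamma> gradV (\<lambda>i. fst p i) j) \<in> borel_measurable (past_space j \<Otimes>\<^sub>M \<rho>)"
    by (rule sgd_measurable) (use measurable_past_component in measurable)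
  moreover have "(\<lambda>p. gradV (sgd \<gamma> gradV (fst p) j) (snd p)) \<in> borel_measurable (past_space j \<Otimes>\<^sub>M \<rho>)"
    using sgd by (intro measurable_grad_comp) auto
  ultimately show ?thesis by measurable
qed

lemma noise_orthogonal_past:
  assumes j: "burn_in \<le> j" and Phi: "Phi \<in> borel_measurable (past_space j)"
    and Phi2: "integrable (past_distr j) (\<lambda>s. (norm (Phi s))\<^sup>2)"
  shows "integrable M (\<lambda>\<omega>. Phi (past j \<omega>) \<bullet> noise j (sample \<omega>))"
    and "(\<integral>\<omega>. Phi (past j \<omega>) \<bullet> noise j (sample \<omega>) \<partial>M) = 0"
proof -
  interpret D: prob_space "past_distr j" by (rule prob_space_past_distr)
  define F where "F s = sgd \<gamma> gradV s j" for s
  define q where "q p = Phi (fst p) \<bullet> (\<gamma> j *\<^sub>R (gradV (F (fst p)) (snd p) - mean_grad (F (fst p))))" for p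
  have q_meas: "q \<in> borel_measurable (past_space j \<Otimes>\<^sub>M \<rho>)"
    unfolding q_def F_def using Phi measurable_centered_grad_past[of j] by measurable
  have sections: "integrable \<rho> (\<lambda>z. q (s, z))" for s
    unfolding q_def using integrable_grad[of "F s"] by simp
  have bound: "(\<integral>z. norm (q (s, z)) \<partial>\<rho>) \<le> (norm (Phi s))\<^sup>2 / 2 + (\<gamma> j)\<^sup>2 * C"
    if s: "s \<in> space (past_space j)" for s
  proof -
    define c where "c z = norm (gradV (F s) z - mean_grad (F s))" for z
    note moments = sgd_grad_moments[OF j, of s, folded F_def]
    have pointwise: "norm (q (s, z)) \<le> (norm (Phi s))\<^sup>2 / 2 + (\<gamma> j)\<^sup>2 / 2 * (c z)\<^sup>2" for z
      using abs_inner_le_half_sum_squares[of "Phi s" "\<gamma> j *\<^sub>R (gradV (F s) z - mean_grad (F s))"] \<gamma>_pos[of j]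
      by (simp add: q_def c_def power_mult_distrib add_divide_distrib)
    have "(\<integral>z. norm (q (s, z)) \<partial>\<rho>) \<le> (\<integral>z. (norm (Phi s))\<^sup>2 / 2 + (\<gamma> j)\<^sup>2 / 2 * (c z)\<^sup>2 \<partial>\<rho>)"
      using pointwise moments(1) space_past_spaceD[OF s] sections[of s]
      by (intro integral_mono) (auto simp: c_def)
    also have "\<dots> = (norm (Phi s))\<^sup>2 / 2 + (\<gamma> j)\<^sup>2 / 2 * (\<integral>z. (c z)\<^sup>2 \<partial>\<rho>)"
      using moments(1) space_past_spaceD[OF s] by (simp add: c_def R.prob_space)
    also have "\<dots> \<le> (norm (Phi s))\<^sup>2 / 2 + (\<gamma> j)\<^sup>2 / 2 * (2 * C)"
      using moments(2) space_past_spaceD[OF s] by (intro add_left_mono mult_left_mono) (auto simp: c_def)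
    finally show ?thesis by simp
  qed
  have B: "integrable (past_distr j) (\<lambda>s. (norm (Phi s))\<^sup>2 / 2 + (\<gamma> j)\<^sup>2 * C)"
    using Phi2 by simp
  note Fubini = past_current_Fubini[OF q_meas sections bound B]
  have q_past: "Phi (past j \<omega>) \<bullet> noise j (sample \<omega>) = q (past j \<omega>, X j \<omega>)" for \<omega>
    by (simp add: q_def F_def noise_past_current)
  have "(\<integral>z. q (s, z) \<partial>\<rho>) = 0" for s
    unfolding q_def using integrable_grad[of "F s"]
    by (simp add: Bochner_Integration.integral_diff R.prob_space mean_grad_def)
  then show "integrable M (\<lambda>\<omega>. Phi (past j \<omega>) \<bullet> noise j (sample \<omega>))"
    and "(\<integral>\<omega>. Phi (past j \<omega>) \<bullet> noise j (sample \<omega>) \<partial>M) = 0"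
    unfolding q_past using Fubini by simp_all
qed

lemma noise_second_moment:
  assumes j: "burn_in \<le> j"
  shows "integrable M (\<lambda>\<omega>. (norm (noise j (sample \<omega>)))\<^sup>2)"
    and "(\<integral>\<omega>. (norm (noise j (sample \<omega>)))\<^sup>2 \<partial>M) \<le> 2 * C * (\<gamma> j)\<^sup>2"
proof -
  interpret D: prob_space "past_distr j" by (rule prob_space_past_distr)
  define F where "F s = sgd \<gamma> gradV s j" for s
  define q where "q p = (\<gamma> j)\<^sup>2 * (norm (gradV (F (fst p)) (snd p) - mean_grad (F (fst p))))\<^sup>2" for p
  have q_meas: "q \<in> borel_measurable (past_space j \<Otimes>\<^sub>M \<rho>)"
    unfolding q_def F_def using measurable_centered_grad_past[of j] by measurable
  have sections: "integrable \<rho> (\<lambda>z. q (s, z))"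
    and section_bound: "(\<integral>z. q (s, z) \<partial>\<rho>) \<le> 2 * C * (\<gamma> j)\<^sup>2"
    if s: "s \<in> space (past_space j)" for s
  proof -
    note moments = sgd_grad_moments[OF j, of s, folded F_def]
    show "integrable \<rho> (\<lambda>z. q (s, z))"
      using moments(1) space_past_spaceD[OF s] by (simp add: q_def)
    have "(\<integral>z. q (s, z) \<partial>\<rho>) = (\<gamma> j)\<^sup>2 * (\<integral>z. (norm (gradV (F s) z - mean_grad (F s)))\<^sup>2 \<partial>\<rho>)"
      by (simp add: q_def)
    also have "\<dots> \<le> (\<gamma> j)\<^sup>2 * (2 * C)"
      using moments(2) space_past_spaceD[OF s] by (intro mult_left_mono) auto
    finally show "(\<integral>z. q (s, z) \<partial>\<rho>) \<le> 2 * C * (\<gamma> j)\<^sup>2" by (simp add: mult.commute)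
  qed
  have "(\<integral>z. norm (q (s, z)) \<partial>\<rho>) \<le> 2 * C * (\<gamma> j)\<^sup>2" if "s \<in> space (past_space j)" for s
    using section_bound[OF that] by (simp add: q_def)
  note Fubini = past_current_Fubini[OF q_meas sections this D.integrable_const]
  have q_past: "(norm (noise j (sample \<omega>)))\<^sup>2 = q (past j \<omega>, X j \<omega>)" for \<omega>
    using \<gamma>_pos[of j] by (simp add: q_def F_def noise_past_current power_mult_distrib)
  show "integrable M (\<lambda>\<omega>. (norm (noise j (sample \<omega>)))\<^sup>2)"
    unfolding q_past using Fubini(1) by simp
  have "(\<integral>s. (\<integral>z. q (s, z) \<partial>\<rho>) \<partial>past_distr j) \<le> 2 * C * (\<gamma> j)\<^sup>2"
  proof (cases "integrable (past_distr j) (\<lambda>s. \<integral>z. q (s, z) \<partial>\<rho>)")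
    case True
    then have "(\<integral>s. (\<integral>z. q (s, z) \<partial>\<rho>) \<partial>past_distr j) \<le> (\<integral>s. 2 * C * (\<gamma> j)\<^sup>2 \<partial>past_distr j)"
      using section_bound by (intro integral_mono_AE AE_I2) (auto simp: space_past_distr)
    then show ?thesis by (simp add: D.prob_space)
  next
    case False
    then show ?thesis using C_pos by (simp add: not_integrable_integral_eq)
  qed
  then show "(\<integral>\<omega>. (norm (noise j (sample \<omega>)))\<^sup>2 \<partial>M) \<le> 2 * C * (\<gamma> j)\<^sup>2"
    unfolding q_past using Fubini(2) by simp
qed

end

context sgd_setting
begin

lemma noise_sum_second_moment:
  assumes m: "burn_in \<le> m"
  shows "integrable M (\<lambda>\<omega>. (norm (noise_sum m k (sample \<omega>)))\<^sup>2)"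
    and "(\<integral>\<omega>. (norm (noise_sum m k (sample \<omega>)))\<^sup>2 \<partial>M) \<le> 2 * C * (\<Sum>i\<in>{m..<k}. (\<gamma> i)\<^sup>2)"
proof -
  have "integrable M (\<lambda>\<omega>. (norm (noise_sum m k (sample \<omega>)))\<^sup>2)
      \<and> (\<integral>\<omega>. (norm (noise_sum m k (sample \<omega>)))\<^sup>2 \<partial>M) \<le> 2 * C * (\<Sum>i\<in>{m..<k}. (\<gamma> i)\<^sup>2)"
  proof (induction k)
    case (Suc k)
    show ?case
    proof (cases "m \<le> k")
      case False
      then show ?thesis by (simp add: noise_sum_def)
    next
      case True
      let ?W = "\<lambda>\<omega>. noise_sum m k (sample \<omega>)" and ?\<xi> = "\<lambda>\<omega>. noise k (sample \<omega>)"
      have W_meas: "noise_sum m k \<in> borel_measurable (past_space k)"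
        by (rule noise_sum_measurable_past) simp
      have "integrable (past_distr k) (\<lambda>s. (norm (noise_sum m k s))\<^sup>2)"
        using W_meas Suc.IH by (intro integrable_past_distrI) (auto simp: noise_sum_past)
      note orth = noise_orthogonal_past[OF _ W_meas this, unfolded noise_sum_past[OF order_refl]]
      note \<xi> = noise_second_moment[of k]
      have expand: "(norm (noise_sum m (Suc k) (sample \<omega>)))\<^sup>2
          = (norm (?W \<omega>))\<^sup>2 + 2 * (?W \<omega> \<bullet> ?\<xi> \<omega>) + (norm (?\<xi> \<omega>))\<^sup>2" for \<omega>
        unfolding noise_sum_Suc[OF True] by (rule power2_norm_add)
      show ?thesis
        unfolding expand using Suc.IH orth \<xi> True m
        by (simp add: Bochner_Integration.integral_add algebra_simps)
    qed
  qed (simp add: noise_sum_def)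
  then show "integrable M (\<lambda>\<omega>. (norm (noise_sum m k (sample \<omega>)))\<^sup>2)"
    and "(\<integral>\<omega>. (norm (noise_sum m k (sample \<omega>)))\<^sup>2 \<partial>M) \<le> 2 * C * (\<Sum>i\<in>{m..<k}. (\<gamma> i)\<^sup>2)"
    by auto
qed

lemma noise_sum_orthogonal_past:
  assumes m: "burn_in \<le> m" and mk: "m \<le> k" and kn: "k \<le> n"
    and Phi: "Phi \<in> borel_measurable (past_space k)"
    and Phi_le: "\<And>s. norm (Phi s) \<le> norm (noise_sum m k s)"
  shows "integrable M (\<lambda>\<omega>. Phi (past k \<omega>) \<bullet> noise_sum k n (sample \<omega>))"
    and "(\<integral>\<omega>. Phi (past k \<omega>) \<bullet> noise_sum k n (sample \<omega>) \<partial>M) = 0"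
proof -
  have each: "integrable M (\<lambda>\<omega>. Phi (past k \<omega>) \<bullet> noise j (sample \<omega>))
      \<and> (\<integral>\<omega>. Phi (past k \<omega>) \<bullet> noise j (sample \<omega>) \<partial>M) = 0" if j: "j \<in> {k..<n}" for j
  proof -
    define Psi where "Psi s = Phi (restrict s {..<k})" for s
    have Psi_past: "Psi (past j \<omega>) = Phi (past k \<omega>)" for \<omega>
      using j by (simp add: Psi_def restrict_past)
    have Psi_meas: "Psi \<in> borel_measurable (past_space j)"
      unfolding Psi_def using measurable_comp[OF measurable_restrict_subset Phi] j
      by (simp add: comp_def)
    have W_meas: "noise_sum m k \<in> borel_measurable (past_space j)"
      using j by (intro noise_sum_measurable_past) simp
    have "integrable (past_distr j) (\<lambda>s. (norm (noise_sum m k s))\<^sup>2)"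
      using W_meas noise_sum_second_moment(1)[OF m, of k] j
      by (intro integrable_past_distrI) (auto simp: noise_sum_past)
    then have "integrable (past_distr j) (\<lambda>s. (norm (Psi s))\<^sup>2)"
    proof (rule Bochner_Integration.integrable_bound)
      show "(\<lambda>s. (norm (Psi s))\<^sup>2) \<in> borel_measurable (past_distr j)"
        using Psi_meas by (simp add: measurable_cong_sets[OF sets_past_distr refl])
      have "noise_sum m k (restrict s {..<k}) = noise_sum m k s" for s
        by (rule noise_sum_cong) simp
      then have "norm (Psi s) \<le> norm (noise_sum m k s)" for s
        using Phi_le[of "restrict s {..<k}"] by (simp add: Psi_def)
      then have "(norm (Psi s))\<^sup>2 \<le> (norm (noise_sum m k s))\<^sup>2" for s
        by (intro power_mono) auto
      then show "AE s in past_distr j. norm ((norm (Psi s))\<^sup>2) \<le> norm ((norm (noise_sum m k s))\<^sup>2)"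
        by (intro AE_I2) simp
    qed
    from noise_orthogonal_past[OF _ Psi_meas this] m mk j show ?thesis
      unfolding Psi_past by simp
  qed
  have sum: "Phi (past k \<omega>) \<bullet> noise_sum k n (sample \<omega>) = (\<Sum>j\<in>{k..<n}. Phi (past k \<omega>) \<bullet> noise j (sample \<omega>))"
    for \<omega> by (simp add: noise_sum_def inner_sum_right)
  show "integrable M (\<lambda>\<omega>. Phi (past k \<omega>) \<bullet> noise_sum k n (sample \<omega>))"
    unfolding sum using each by (intro Bochner_Integration.integrable_sum) auto
  show "(\<integral>\<omega>. Phi (past k \<omega>) \<bullet> noise_sum k n (sample \<omega>) \<partial>M) = 0"
    unfolding sum using each by (subst Bochner_Integration.integral_sum) auto
qed

lemma noise_sum_maximal_inequality:
  assumes m: "burn_in \<le> m" and eps: "eps > 0"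
  shows "P.prob {\<omega>\<in>space M. \<exists>k\<le>n. eps \<le> norm (noise_sum m (m + k) (sample \<omega>))}
           \<le> 2 * C * (\<Sum>i\<in>{m..<m + n}. (\<gamma> i)\<^sup>2) / eps\<^sup>2"
proof -
  define S where "S k \<omega> = noise_sum m (m + k) (sample \<omega>)" for k \<omega>
  define first where "first k s \<longleftrightarrow> eps \<le> norm (noise_sum m (m + k) s) \<and> (\<forall>i<k. norm (noise_sum m (m + i) s) < eps)"
    for k s
  define Phi where "Phi k s = (if first k s then noise_sum m (m + k) s else 0)" for k s
  have stopped: "indicator {\<omega>\<in>space M. eps \<le> norm (S k \<omega>) \<and> (\<forall>i<k. norm (S i \<omega>) < eps)} \<omega> *\<^sub>R S k \<omega>
      = Phi k (past (m + k) \<omega>)" if "\<omega> \<in> space M" for k \<omega>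
    using that by (simp add: S_def Phi_def first_def noise_sum_past indicator_def)
  have increment: "S n \<omega> - S k \<omega> = noise_sum (m + k) (m + n) (sample \<omega>)" if "k \<le> n" for k \<omega>
    using noise_sum_split[of m "m + k" "m + n"] that by (simp add: S_def)
  have Phi_meas: "Phi k \<in> borel_measurable (past_space (m + k))" for k
  proof -
    have [measurable]: "noise_sum m (m + i) \<in> borel_measurable (past_space (m + k))" if "i \<le> k" for i
      using that by (intro noise_sum_measurable_past) simp
    show ?thesis unfolding Phi_def first_def by measurable
  qed
  have "P.prob {\<omega>\<in>space M. \<exists>k\<le>n. eps \<le> norm (S k \<omega>)} \<le> P.expectation (\<lambda>\<omega>. (norm (S n \<omega>))\<^sup>2) / eps\<^sup>2"
  proof (rule P.maximal_inequality_orthogonal_increments[OF _ _ _ _ eps])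
    show "S k \<in> borel_measurable M" for k unfolding S_def by measurable
    show "integrable M (\<lambda>\<omega>. (norm (S k \<omega>))\<^sup>2)" for k
      unfolding S_def by (rule noise_sum_second_moment(1)[OF m])
    fix k assume "k \<le> n"
    have Phi_le: "norm (Phi k s) \<le> norm (noise_sum m (m + k) s)" for s by (simp add: Phi_def)
    note orth = noise_sum_orthogonal_past[OF m _ _ Phi_meas[of k] Phi_le, where n = "m + n"]
    have eq: "(indicator {\<omega>\<in>space M. eps \<le> norm (S k \<omega>) \<and> (\<forall>i<k. norm (S i \<omega>) < eps)} \<omega> *\<^sub>R S k \<omega>) \<bullet> (S n \<omega> - S k \<omega>)
        = Phi k (past (m + k) \<omega>) \<bullet> noise_sum (m + k) (m + n) (sample \<omega>)" if "\<omega> \<in> space M" for \<omega>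
      using stopped[OF that] increment[OF \<open>k \<le> n\<close>] by simp
    show "integrable M (\<lambda>\<omega>. (indicator {\<omega>\<in>space M. eps \<le> norm (S k \<omega>) \<and> (\<forall>i<k. norm (S i \<omega>) < eps)} \<omega> *\<^sub>R S k \<omega>) \<bullet> (S n \<omega> - S k \<omega>))"
      using orth(1) \<open>k \<le> n\<close> by (subst Bochner_Integration.integrable_cong[OF refl eq]) auto
    show "(\<integral>\<omega>. (indicator {\<omega>\<in>space M. eps \<le> norm (S k \<omega>) \<and> (\<forall>i<k. norm (S i \<omega>) < eps)} \<omega> *\<^sub>R S k \<omega>) \<bullet> (S n \<omega> - S k \<omega>) \<partial>M) = 0"
      using orth(2) \<open>k \<le> n\<close> by (subst Bochner_Integration.integral_cong[OF refl eq]) auto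
  qed
  also have "\<dots> \<le> 2 * C * (\<Sum>i\<in>{m..<m + n}. (\<gamma> i)\<^sup>2) / eps\<^sup>2"
    using noise_sum_second_moment(2)[OF m, of "m + n"] by (simp add: S_def divide_right_mono)
  finally show ?thesis unfolding S_def .
qed

lemma noise_sum_tail_prob:
  assumes m: "burn_in \<le> m" and eps: "eps > 0"
  shows "P.prob {\<omega>\<in>space M. \<exists>k\<ge>m. eps \<le> norm (noise_sum m k (sample \<omega>))}
           \<le> 2 * C * (\<Sum>i. (\<gamma> (i + m))\<^sup>2) / eps\<^sup>2"
proof -
  have "P.prob {\<omega>\<in>space M. \<exists>k. eps \<le> norm (noise_sum m (m + k) (sample \<omega>))}
      \<le> 2 * C * (\<Sum>i. (\<gamma> (i + m))\<^sup>2) / eps\<^sup>2"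
  proof (rule P.prob_ex_le_of_prefix_bound)
    show "{\<omega>\<in>space M. eps \<le> norm (noise_sum m (m + k) (sample \<omega>))} \<in> P.events" for k
      by measurable
    fix n
    have "(\<Sum>i\<in>{m..<m + n}. (\<gamma> i)\<^sup>2) = (\<Sum>i<n. (\<gamma> (i + m))\<^sup>2)"
      using sum.shift_bounds_nat_ivl[of "\<lambda>i. (\<gamma> i)\<^sup>2" 0 m n] by (simp add: atLeast0LessThan add.commute)
    also have "\<dots> \<le> (\<Sum>i. (\<gamma> (i + m))\<^sup>2)"
      using \<gamma>_sq summable_iff_shift[of "\<lambda>i. (\<gamma> i)\<^sup>2" m] by (intro sum_le_suminf) auto
    finally have "2 * C * (\<Sum>i\<in>{m..<m + n}. (\<gamma> i)\<^sup>2) / eps\<^sup>2 \<le> 2 * C * (\<Sum>i. (\<gamma> (i + m))\<^sup>2) / eps\<^sup>2"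
      using C_pos by (intro divide_right_mono mult_left_mono) auto
    then show "P.prob {\<omega>\<in>space M. \<exists>k\<le>n. eps \<le> norm (noise_sum m (m + k) (sample \<omega>))}
        \<le> 2 * C * (\<Sum>i. (\<gamma> (i + m))\<^sup>2) / eps\<^sup>2"
      using noise_sum_maximal_inequality[OF m eps, of n] by linarith
  qed
  also have "{\<omega>\<in>space M. \<exists>k. eps \<le> norm (noise_sum m (m + k) (sample \<omega>))}
      = {\<omega>\<in>space M. \<exists>k\<ge>m. eps \<le> norm (noise_sum m k (sample \<omega>))}"
  proof safe
    fix \<omega> k assume "eps \<le> norm (noise_sum m (m + k) (sample \<omega>))"
    then show "\<exists>k\<ge>m. eps \<le> norm (noise_sum m k (sample \<omega>))" by (intro exI[of _ "m + k"]) simp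
  next
    fix \<omega> k assume "m \<le> k" "eps \<le> norm (noise_sum m k (sample \<omega>))"
    then show "\<exists>k'. eps \<le> norm (noise_sum m (m + k') (sample \<omega>))" by (intro exI[of _ "k - m"]) simp
  qed
  finally show ?thesis .
qed

lemma AE_noise_sum_Cauchy: "AE \<omega> in M. Cauchy (\<lambda>k. noise_sum burn_in k (sample \<omega>))"
proof (rule P.AE_Cauchy_of_tail_prob)
  show "(\<lambda>\<omega>. noise_sum burn_in k (sample \<omega>)) \<in> borel_measurable M" for k by measurable
  fix eps :: real assume eps: "eps > 0"
  define T where "T m = 2 * C * (\<Sum>i. (\<gamma> (i + m))\<^sup>2) / eps\<^sup>2" for m
  have "(\<lambda>m. (\<Sum>i. (\<gamma> i)\<^sup>2) - (\<Sum>i<m. (\<gamma> i)\<^sup>2)) \<longlonglongrightarrow> (\<Sum>i. (\<gamma> i)\<^sup>2) - (\<Sum>i. (\<gamma> i)\<^sup>2)"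
    by (intro tendsto_diff tendsto_const summable_LIMSEQ[OF \<gamma>_sq])
  then have "(\<lambda>m. \<Sum>i. (\<gamma> (i + m))\<^sup>2) \<longlonglongrightarrow> 0"
    by (simp add: suminf_minus_initial_segment[OF \<gamma>_sq])
  then have "T \<longlonglongrightarrow> 2 * C * 0 / eps\<^sup>2"
    unfolding T_def using eps by (intro tendsto_intros) auto
  then have T: "T \<longlonglongrightarrow> 0" by simp
  have "eventually (\<lambda>m. P.prob {\<omega>\<in>space M. \<exists>k\<ge>m. eps \<le> norm (noise_sum burn_in k (sample \<omega>)
      - noise_sum burn_in m (sample \<omega>))} \<le> T m) sequentially"
    using eventually_ge_at_top[of burn_in]
  proof eventually_elim
    case (elim m)
    have "noise_sum burn_in k s - noise_sum burn_in m s = noise_sum m k s" if "m \<le> k" for k s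
      using noise_sum_split[OF elim that] by simp
    then have "{\<omega>\<in>space M. \<exists>k\<ge>m. eps \<le> norm (noise_sum burn_in k (sample \<omega>) - noise_sum burn_in m (sample \<omega>))}
        = {\<omega>\<in>space M. \<exists>k\<ge>m. eps \<le> norm (noise_sum m k (sample \<omega>))}"
      by auto
    then show ?case unfolding T_def using noise_sum_tail_prob[OF elim eps] by simp
  qed
  then show "(\<lambda>m. P.prob {\<omega>\<in>space M. \<exists>k\<ge>m. eps \<le> norm (noise_sum burn_in k (sample \<omega>)
      - noise_sum burn_in m (sample \<omega>))}) \<longlonglongrightarrow> 0"
    by (intro tendsto_sandwich[OF _ _ tendsto_const T]) auto
qed

theorem AE_sgd_tendsto: "AE \<omega> in M. (\<lambda>n. sgd \<gamma> gradV (sample \<omega>) n) \<longlonglongrightarrow> fK"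
  using AE_noise_sum_Cauchy
proof (rule AE_mp[OF _ AE_I2[OF impI]])
  fix \<omega> assume \<omega>: "\<omega> \<in> space M" and "Cauchy (\<lambda>k. noise_sum burn_in k (sample \<omega>))"
  then obtain W_lim where W: "(\<lambda>k. noise_sum burn_in k (sample \<omega>)) \<longlonglongrightarrow> W_lim"
    using Cauchy_convergent convergent_def by blast
  show "(\<lambda>n. sgd \<gamma> gradV (sample \<omega>) n) \<longlonglongrightarrow> fK"
  proof (rule perturbed_descent_tendsto[OF _ _ W \<gamma>_pos step_size_tendsto_zero \<gamma>_sum mean_grad_coercive])
    fix n assume n: "burn_in \<le> n"
    show "sgd \<gamma> gradV (sample \<omega>) (Suc n) = sgd \<gamma> gradV (sample \<omega>) n
        - \<gamma> n *\<^sub>R mean_grad (sgd \<gamma> gradV (sample \<omega>) n)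
        - (noise_sum burn_in (Suc n) (sample \<omega>) - noise_sum burn_in n (sample \<omega>))"
      by (simp only: sgd_Suc_noise noise_sum_Suc[OF n]) simp
    have "(norm (mean_grad (sgd \<gamma> gradV (sample \<omega>) n)))\<^sup>2 \<le> 2 * C"
      using measurable_space[OF X_meas \<omega>] by (intro sgd_grad_moments(3)[OF n]) simp
    then show "norm (mean_grad (sgd \<gamma> gradV (sample \<omega>) n)) \<le> sqrt (2 * C)"
      by (rule real_le_rsqrt)
  qed
qed

end

theorem mainTheorem2:
  fixes \<rho> :: "'z measure" and M :: "'w measure"
    and X :: "nat \<Rightarrow> 'w \<Rightarrow> 'z"
    and V :: "'a::euclidean_space \<Rightarrow> 'z \<Rightarrow> real"
    and gradV :: "'a \<Rightarrow> 'z \<Rightarrow> 'a"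
    and HV :: "'a \<Rightarrow> 'z \<Rightarrow> 'a \<Rightarrow> 'a"
    and Mb :: real and K :: "'a set" and fK :: 'a
    and \<gamma> :: "nat \<Rightarrow> real" and C :: real and N :: nat
  assumes rho: "prob_space \<rho>"
    and M: "prob_space M"
    and X_meas: "\<And>i. X i \<in> measurable M \<rho>"
    and X_distr: "\<And>i. distr M \<rho> (X i) = \<rho>"
    and X_indep: "prob_space.indep_vars M (\<lambda>_. \<rho>) X UNIV"
    and V_nonneg: "\<And>f z. z \<in> space \<rho> \<Longrightarrow> V f z \<ge> 0"
    and V_convex: "\<And>z. z \<in> space \<rho> \<Longrightarrow> convex_on UNIV (\<lambda>f. V f z)"
    and V_grad: "\<And>f z. z \<in> space \<rho> \<Longrightarrow>
                   ((\<lambda>g. V g z) has_derivative (\<lambda>h. gradV f z \<bullet> h)) (at f)"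
    and V_hess: "\<And>f z. z \<in> space \<rho> \<Longrightarrow>
                   ((\<lambda>g. gradV g z) has_derivative HV f z) (at f)"
    and I_finite: "\<And>f. integrable \<rho> (\<lambda>z. V f z)"
    and H_psd: "\<And>f g z. z \<in> space \<rho> \<Longrightarrow> g \<bullet> HV f z g \<ge> 0"
    and H_bound: "\<And>f z. z \<in> space \<rho> \<Longrightarrow> onorm (HV f z) \<le> Mb"
    and K: "closed K" "convex K"
    and fK_in: "fK \<in> K"
    and fK_crit: "(risk \<rho> V has_derivative (\<lambda>h. 0 \<bullet> h)) (at fK)"
    and fK_unique: "\<And>f. f \<noteq> fK \<Longrightarrow>
          \<exists>g. (risk \<rho> V has_derivative (\<lambda>h. g \<bullet> h)) (at f) \<and> (f - fK) \<bullet> g > 0"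
    and \<gamma>_pos: "\<And>n. \<gamma> n > 0"
    and \<gamma>_sum: "\<not> summable \<gamma>"
    and \<gamma>_sq: "summable (\<lambda>n. (\<gamma> n)\<^sup>2)"
    and C_pos: "C > 0" and N_pos: "N > 0"
    and stab: "\<And>n zs. n > N \<Longrightarrow> (\<forall>i. zs i \<in> space \<rho>) \<Longrightarrow>
          0 < (\<integral>z. V (sgd \<gamma> gradV zs n) z - V (sgd \<gamma> gradV zs n - \<gamma> n *\<^sub>R gradV (sgd \<gamma> gradV zs n) z) z \<partial>\<rho>)
          \<and> (\<integral>z. V (sgd \<gamma> gradV zs n) z - V (sgd \<gamma> gradV zs n - \<gamma> n *\<^sub>R gradV (sgd \<gamma> gradV zs n) z) z \<partial>\<rho>) \<le> C * \<gamma> n"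
  shows "AE \<omega> in M. (\<lambda>n. norm (sgd \<gamma> gradV (\<lambda>i. X i \<omega>) n - fK)) \<longlonglongrightarrow> 0"
proof -
  have "sgd_setting M \<rho> X V gradV HV Mb fK \<gamma> C N"
    unfolding sgd_setting_def sgd_setting_axioms_def iid_sequence_def iid_sequence_axioms_def
      loss_setting_def loss_setting_axioms_def
    using assms by blast
  then interpret sgd_setting M \<rho> X V gradV HV Mb fK \<gamma> C N .
  from AE_sgd_tendsto show ?thesis
    by eventually_elim (intro tendsto_norm_zero LIM_zero)
qed

end
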